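(* For all $n\ge1$: (1) $R_n(1/2/3)=\{\sigma\in\Pi_n:\sigma\text{ has at most 2 blocks}\}$ and $\#R_n(1/2/3)=2^{n-1}$; (2) $R_n(123)=\{\sigma\in\Pi_n:\sigma\text{ is a matching}\}$ and $\#R_n(123)=\sum_{i\ge0}\binom n{2i}(2i)!!$; (3) $R_n(12/3)$ is the set of $\sigma\in\Pi_n$ for which there exists $k\in[0,n]$ such that $\sigma_{\le k}=1/2/\ldots/k$ and $\sigma_{>k}$ is layered with blocks $D_1,\ldots,D_t$ listed left to right satisfying $B(D_1)>B(D_2)>\cdots>B(D_t)$; and $\#R_n(12/3)=2^{n-1}$; (4) $R_n(1/23)=\{\sigma=C_1/\ldots/C_l\in\Pi_n\text{ (canonical order)}:\#C_i=1\text{ for all }i\ge2\}$ and $\#R_n(1/23)=2^{n-1}$; (5) $R_n(13/2)=\{\sigma\in\Pi_n:\sigma\text{ is layered}\}$ and $\#R_n(13/2)=2^{n-1}$.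
   Context: $[n]=\{1,\ldots,n\}$, $[a,b]=\{a,\ldots,b\}$; $\Pi_n$ is the set of partitions of $[n]$, written with slashes between blocks. A partition $\pi=B_1/\ldots/B_k$ is in canonical order if $\min B_1<\cdots<\min B_k$; for $S$ contained in a block of $\sigma$, $B(S)$ is the index of the block of $\sigma$ containing $S$ in canonical order. The restricted growth function of $\pi\in\Pi_n$ is $\rho(\pi)=a_1\ldots a_n$ with $a_i=B(\{i\})$. A sequence contains $r$ if some subsequence standardizes (order-preserving relabeling of values onto $1,2,\ldots$) to $r$. $\sigma$ R-contains $\pi$ if $\rho(\sigma)$ contains $\rho(\pi)$, otherwise R-avoids $\pi$; $R_n(\pi)$ is the set of $\sigma\in\Pi_n$ R-avoiding $\pi$. For $T\subseteq[n]$, $\sigma_T$ is the partition of $T$ with blocks the nonempty $C\cap T$, $C\in\sigma$; $\sigma_{\le k}=\sigma_{[k]}$, $\sigma_{>k}=\sigma_{[k+1,n]}$. A matching is a partition with all blocks of size at most 2; $(2i)!!=1\cdot3\cdots(2i-1)$, $(0)!!=1$. A partition (of a set of consecutive integers) is layered if all its blocks are intervals of consecutive integers. *)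

theory Defs
  imports Main "HOL-Library.Disjoint_Sets" "HOL-Library.Sublist"
begin

definition Pi_n :: "nat \<Rightarrow> nat set set set" where
  "Pi_n n = {P. partition_on {1..n} P}"

definition block_of :: "nat set set \<Rightarrow> nat set \<Rightarrow> nat set" where
  "block_of \<sigma> S = (THE C. C \<in> \<sigma> \<and> S \<subseteq> C)"

text \<open>Index (1-based) of a block C of sigma in canonical order (ordered by minima).\<close>
definition blockidx :: "nat set set \<Rightarrow> nat set \<Rightarrow> nat" where
  "blockidx \<sigma> C = card {D \<in> \<sigma>. Min D \<le> Min C}"

definition Bidx :: "nat set set \<Rightarrow> nat set \<Rightarrow> nat" where
  "Bidx \<sigma> S = blockidx \<sigma> (block_of \<sigma> S)"

definition rgf :: "nat set set \<Rightarrow> nat \<Rightarrow> nat list" where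
  "rgf \<sigma> n = map (\<lambda>i. Bidx \<sigma> {i}) [1..<n+1]"

definition std :: "nat list \<Rightarrow> nat list" where
  "std s = map (\<lambda>x. card {y \<in> set s. y \<le> x}) s"

definition contains :: "nat list \<Rightarrow> nat list \<Rightarrow> bool" where
  "contains w r \<longleftrightarrow> (\<exists>s. subseq s w \<and> std s = r)"

definition R_avoid :: "nat \<Rightarrow> nat set set \<Rightarrow> nat set set set" where
  "R_avoid n \<pi> = {\<sigma> \<in> Pi_n n. \<not> contains (rgf \<sigma> n) (rgf \<pi> 3)}"

definition restr :: "nat set set \<Rightarrow> nat set \<Rightarrow> nat set set" where
  "restr \<sigma> T = {C \<inter> T | C. C \<in> \<sigma> \<and> C \<inter> T \<noteq> {}}"

definition layered :: "nat set set \<Rightarrow> bool" where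
  "layered P \<longleftrightarrow> (\<forall>C\<in>P. \<exists>a b. C = {a..b})"

definition is_matching :: "nat set set \<Rightarrow> bool" where
  "is_matching \<sigma> \<longleftrightarrow> (\<forall>C\<in>\<sigma>. card C \<le> 2)"

text \<open>(2i)!! = 1*3*...*(2i-1), (0)!! = 1\<close>
definition dfact :: "nat \<Rightarrow> nat" where
  "dfact i = (\<Prod>j<i. 2*j+1)"

end

(*
  Letters of the restricted growth function compare like the least elements of the blocks they
  index, so a pattern of length three occurs in rgf sigma exactly when it occurs in the word of
  block minima x |-> Min (block of x). Read on that word, avoiding 1/2/3 means at most two
  distinct minima, avoiding 123 means that no block has three elements, avoiding 1/23 means that
  every block other than the block of 1 is a singleton, and avoiding 13/2 means that no block
  skips an element. Avoiding 12/3 means that no repeated value is followed by a larger one, i.e.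
  the word is the identity up to some k and weakly decreasing afterwards.

  For the counts, a partition with at most two blocks, or with singletons outside the block of 1,
  is determined by the block of 1, an arbitrary subset of [n] containing 1. Layered partitions
  double from n to n+1 (the new element is a singleton or joins the block of n), and so do the
  12/3-avoiders ({1} is a block and the rest is a shifted avoider, or n+1 joins the block of 1).
  Matchings satisfy T(m+1) = T(m) + m T(m-1) by splitting off the block of one element.
*)

theory Submission
  imports Defs
begin

section \<open>Standardization and patterns of length three\<close>

lemma std_map_strict_mono_on:
  assumes "strict_mono_on (set s) g"
  shows "std (map g s) = std s"
proof -
  have "card {y \<in> g ` set s. y \<le> g x} = card {y \<in> set s. y \<le> x}" if "x \<in> set s" for x
  proof -
    have "{y \<in> g ` set s. y \<le> g x} = g ` {y \<in> set s. y \<le> x}"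
      using strict_mono_on_leD[OF assms] strict_mono_on_less[OF assms] that
      by (fastforce simp: not_le[symmetric])
    moreover have "inj_on g {y \<in> set s. y \<le> x}"
      using strict_mono_on_imp_inj_on[OF assms] by (rule inj_on_subset) auto
    ultimately show ?thesis by (simp add: card_image)
  qed
  then show ?thesis by (simp add: std_def)
qed

lemma Collect_insert_conj:
  "{u \<in> insert a A. P u} = (if P a then insert a {u \<in> A. P u} else {u \<in> A. P u})"
  by auto

lemma
  fixes x y z :: nat
  shows std_eq_123_iff: "std [x, y, z] = [1, 2, 3] \<longleftrightarrow> x < y \<and> y < z"
    and std_eq_111_iff: "std [x, y, z] = [1, 1, 1] \<longleftrightarrow> x = y \<and> y = z"
    and std_eq_112_iff: "std [x, y, z] = [1, 1, 2] \<longleftrightarrow> x = y \<and> y < z"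
    and std_eq_122_iff: "std [x, y, z] = [1, 2, 2] \<longleftrightarrow> x < y \<and> y = z"
    and std_eq_121_iff: "std [x, y, z] = [1, 2, 1] \<longleftrightarrow> x = z \<and> x < y"
  unfolding std_def list.map list.set Collect_insert_conj
  by (cases x y rule: linorder_cases; cases y z rule: linorder_cases; cases x z rule: linorder_cases;
      simp add: card_insert_if)+

lemma ex_ge_iff: "(\<exists>p. a \<le> p \<and> Q p) \<longleftrightarrow> Q a \<or> (\<exists>p. Suc a \<le> p \<and> Q p)" for a :: nat
  by (auto simp: le_less Suc_le_eq) (use Suc_lessI Suc_lessD in blast)+

lemma subseq_Cons_Cons_iff:
  "subseq (x # s) (y # ys) \<longleftrightarrow> (x = y \<and> subseq s ys) \<or> subseq (x # s) ys"
  by (cases "x = y") (auto dest: subseq_Cons')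

lemma subseq_Cons_map_upt_iff:
  "subseq (x # s) (map f [a..<b]) \<longleftrightarrow>
     (\<exists>p. a \<le> p \<and> p < b \<and> x = f p \<and> subseq s (map f [Suc p..<b]))"
proof (induction "b - a" arbitrary: a)
  case 0
  then show ?case by auto
next
  case (Suc d)
  then have "a < b"
    by simp
  then have "subseq (x # s) (map f [a..<b]) \<longleftrightarrow>
      (x = f a \<and> subseq s (map f [Suc a..<b])) \<or> subseq (x # s) (map f [Suc a..<b])"
    by (simp only: upt_conv_Cons list.map subseq_Cons_Cons_iff)
  also have "\<dots> \<longleftrightarrow> (\<exists>p. a \<le> p \<and> p < b \<and> x = f p \<and> subseq s (map f [Suc p..<b]))"
    using Suc.hyps ex_ge_iff[of a "\<lambda>p. p < b \<and> x = f p \<and> subseq s (map f [Suc p..<b])"] \<open>a < b\<close>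
    by simp
  finally show ?case .
qed

lemma contains_length3_iff:
  "contains (map f [a..<b]) [u, v, w] \<longleftrightarrow>
     (\<exists>i j k. a \<le> i \<and> i < j \<and> j < k \<and> k < b \<and> std [f i, f j, f k] = [u, v, w])"
proof -
  have "length s = 3" if "std s = [u, v, w]" for s
    using arg_cong[OF that, of length] by (simp add: std_def)
  then have "contains (map f [a..<b]) [u, v, w] \<longleftrightarrow>
      (\<exists>x y z. subseq [x, y, z] (map f [a..<b]) \<and> std [x, y, z] = [u, v, w])"
    unfolding contains_def by (fastforce simp: length_Suc_conv numeral_3_eq_3)
  also have "\<dots> \<longleftrightarrow>
      (\<exists>i j k. a \<le> i \<and> i < j \<and> j < k \<and> k < b \<and> std [f i, f j, f k] = [u, v, w])"
    unfolding subseq_Cons_map_upt_iff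
  proof safe
    fix i j k
    assume "a \<le> i" "i < j" "j < k" "k < b" "std [f i, f j, f k] = [u, v, w]"
    then show "\<exists>x y z. (\<exists>p. a \<le> p \<and> p < b \<and> x = f p \<and> (\<exists>q. Suc p \<le> q \<and> q < b \<and> y = f q \<and>
        (\<exists>r. Suc q \<le> r \<and> r < b \<and> z = f r \<and> subseq [] (map f [Suc r..<b])))) \<and> std [x, y, z] = [u, v, w]"
      by (intro exI conjI) (auto simp: Suc_le_eq)
  qed (auto simp: Suc_le_eq)
  finally show ?thesis .
qed

lemma card_ge_3_iff:
  fixes S :: "'a::linorder set"
  assumes "finite S"
  shows "3 \<le> card S \<longleftrightarrow> (\<exists>a\<in>S. \<exists>b\<in>S. \<exists>c\<in>S. a < b \<and> b < c)"
proof
  assume "3 \<le> card S"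
  let ?xs = "sorted_list_of_set S"
  have len: "2 < length ?xs"
    using assms \<open>3 \<le> card S\<close> by simp
  have sorted: "sorted_wrt (<) ?xs"
    by simp
  have "?xs ! 0 < ?xs ! 1" "?xs ! 1 < ?xs ! 2"
    using sorted_wrt_nth_less[OF sorted] len by simp_all
  moreover have "{?xs ! 0, ?xs ! 1, ?xs ! 2} \<subseteq> S"
    using nth_mem[of _ ?xs] len assms by simp
  ultimately show "\<exists>a\<in>S. \<exists>b\<in>S. \<exists>c\<in>S. a < b \<and> b < c"
    by blast
next
  assume "\<exists>a\<in>S. \<exists>b\<in>S. \<exists>c\<in>S. a < b \<and> b < c"
  then obtain a b c where abc: "{a, b, c} \<subseteq> S" "a < b" "b < c"
    by blast
  then have "a \<noteq> b" "b \<noteq> c" "a \<noteq> c"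
    using less_trans[of a b c] by auto
  then have "card {a, b, c} = 3"
    by simp
  then show "3 \<le> card S"
    using card_mono[OF assms abc(1)] by simp
qed

lemma ex_atLeastAtMost_eq_iff:
  fixes C :: "nat set"
  assumes "finite C" "C \<noteq> {}"
  shows "(\<exists>a b. C = {a..b}) \<longleftrightarrow> (\<forall>x. Min C \<le> x \<longrightarrow> x \<le> Max C \<longrightarrow> x \<in> C)"
proof
  assume "\<exists>a b. C = {a..b}"
  then obtain a b where C: "C = {a..b}"
    by blast
  then have "a \<le> Min C" "Max C \<le> b"
    using Min_in[OF assms] Max_in[OF assms] by auto
  then show "\<forall>x. Min C \<le> x \<longrightarrow> x \<le> Max C \<longrightarrow> x \<in> C"
    using C by auto
next
  assume "\<forall>x. Min C \<le> x \<longrightarrow> x \<le> Max C \<longrightarrow> x \<in> C"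
  moreover have "C \<subseteq> {Min C..Max C}"
    using assms(1) by (simp add: subset_iff)
  ultimately have "C = {Min C..Max C}"
    by auto
  then show "\<exists>a b. C = {a..b}"
    by blast
qed

lemma rgf_3_eq: "rgf \<pi> 3 = [Bidx \<pi> {1}, Bidx \<pi> {2}, Bidx \<pi> {3}]"
  by (simp add: rgf_def upt_rec numeral_3_eq_3 numeral_2_eq_2)

lemma
  shows rgf_1_2_3: "rgf {{1}, {2}, {3}} 3 = [1, 2, 3]"
    and rgf_123: "rgf {{1, 2, 3}} 3 = [1, 1, 1]"
    and rgf_12_3: "rgf {{1, 2}, {3}} 3 = [1, 1, 2]"
    and rgf_1_23: "rgf {{1}, {2, 3}} 3 = [1, 2, 2]"
    and rgf_13_2: "rgf {{1, 3}, {2}} 3 = [1, 2, 1]"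
  by (simp_all add: rgf_3_eq Bidx_def blockidx_def block_of_def conj_disj_distribR Collect_disj_eq
      cong: conj_cong)

section \<open>Blocks and block minima\<close>

lemma partition_on_block_eq:
  assumes "partition_on A \<sigma>" "C \<in> \<sigma>" "D \<in> \<sigma>" "x \<in> C" "x \<in> D"
  shows "C = D"
  using assms unfolding partition_on_def disjoint_def by blast

lemma partition_on_block_subset: "partition_on A \<sigma> \<Longrightarrow> C \<in> \<sigma> \<Longrightarrow> C \<subseteq> A"
  by (auto dest: partition_onD1)

lemma partition_on_block_nonempty: "partition_on A \<sigma> \<Longrightarrow> C \<in> \<sigma> \<Longrightarrow> C \<noteq> {}"
  by (auto dest: partition_onD3)

lemma partition_on_Diff_block:
  assumes "partition_on A \<sigma>" "C \<in> \<sigma>"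
  shows "partition_on (A - C) (\<sigma> - {C})"
proof -
  have "disjnt C (\<Union>(\<sigma> - {C}))"
    using assms unfolding partition_on_def disjoint_def disjnt_def by blast
  moreover have "insert C (\<sigma> - {C}) = \<sigma>"
    using assms(2) by blast
  ultimately show ?thesis
    using assms(1) partition_on_insert by metis
qed

lemma partition_on_insert_block:
  assumes "partition_on (A - C) \<tau>" "C \<subseteq> A" "C \<noteq> {}"
  shows "partition_on A (insert C \<tau>)"
proof -
  have "disjnt C (\<Union>\<tau>)"
    using partition_onD1[OF assms(1)] by (auto simp: disjnt_def)
  then show ?thesis
    using partition_on_insert assms by blast
qed

lemma block_of_eq:
  assumes "partition_on A \<sigma>" "C \<in> \<sigma>" "S \<subseteq> C" "S \<noteq> {}"
  shows "block_of \<sigma> S = C"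
  unfolding block_of_def
  using assms partition_on_block_eq[OF assms(1)] by (intro the_equality) blast+

lemma
  assumes "partition_on A \<sigma>" "x \<in> A"
  shows block_of_in: "block_of \<sigma> {x} \<in> \<sigma>"
    and mem_block_of: "x \<in> block_of \<sigma> {x}"
proof -
  obtain C where "C \<in> \<sigma>" "x \<in> C"
    using assms partition_onD1 by blast
  then show "block_of \<sigma> {x} \<in> \<sigma>" "x \<in> block_of \<sigma> {x}"
    using block_of_eq[OF assms(1)] by auto
qed

definition block_min :: "nat set set \<Rightarrow> nat \<Rightarrow> nat" where
  "block_min \<sigma> x = Min (block_of \<sigma> {x})"

definition min_rank :: "nat set set \<Rightarrow> nat \<Rightarrow> nat" where
  "min_rank \<sigma> m = card {D \<in> \<sigma>. Min D \<le> m}"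

lemma blockidx_eq_min_rank: "blockidx \<sigma> C = min_rank \<sigma> (Min C)"
  by (simp add: blockidx_def min_rank_def)

lemma rgf_eq_map_min_rank: "rgf \<sigma> n = map (\<lambda>i. min_rank \<sigma> (block_min \<sigma> i)) [1..<Suc n]"
  by (simp add: rgf_def Bidx_def blockidx_eq_min_rank block_min_def)

locale nat_partition =
  fixes A :: "nat set" and \<sigma> :: "nat set set"
  assumes partition: "partition_on A \<sigma>" and finite: "finite A"
begin

lemma finite_block: "C \<in> \<sigma> \<Longrightarrow> finite C"
  using partition_on_block_subset[OF partition] finite finite_subset by blast

lemma Min_block_in: "C \<in> \<sigma> \<Longrightarrow> Min C \<in> C"
  using finite_block partition_on_block_nonempty[OF partition] by simp

lemma inj_on_Min_blocks: "inj_on Min \<sigma>"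
  using Min_block_in partition_on_block_eq[OF partition] by (intro inj_onI) metis

lemma block_min_eq: "C \<in> \<sigma> \<Longrightarrow> x \<in> C \<Longrightarrow> block_min \<sigma> x = Min C"
  unfolding block_min_def using block_of_eq[OF partition] by simp

lemma block_min_eq_Min_iff: "x \<in> A \<Longrightarrow> C \<in> \<sigma> \<Longrightarrow> block_min \<sigma> x = Min C \<longleftrightarrow> x \<in> C"
  using block_min_eq block_of_in[OF partition] mem_block_of[OF partition] inj_on_Min_blocks
  by (metis inj_onD)

lemma block_min_eq_iff:
  "x \<in> A \<Longrightarrow> y \<in> A \<Longrightarrow> block_min \<sigma> x = block_min \<sigma> y \<longleftrightarrow> x \<in> block_of \<sigma> {y}"
  using block_min_eq_Min_iff block_of_in[OF partition] by (simp add: block_min_def)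

lemma block_min_mem: "x \<in> A \<Longrightarrow> block_min \<sigma> x \<in> block_of \<sigma> {x}"
  unfolding block_min_def using Min_block_in block_of_in[OF partition] by blast

lemma block_min_in: "x \<in> A \<Longrightarrow> block_min \<sigma> x \<in> A"
  using block_min_mem block_of_in[OF partition] partition_on_block_subset[OF partition] by blast

lemma block_min_le: "x \<in> A \<Longrightarrow> block_min \<sigma> x \<le> x"
  unfolding block_min_def
  using finite_block block_of_in[OF partition] mem_block_of[OF partition] by simp

lemma block_min_block_min: "x \<in> A \<Longrightarrow> block_min \<sigma> (block_min \<sigma> x) = block_min \<sigma> x"
  using block_min_mem block_min_eq block_of_in[OF partition] by (simp add: block_min_def)

lemma block_min_image: "block_min \<sigma> ` A = Min ` \<sigma>"
proof
  show "block_min \<sigma> ` A \<subseteq> Min ` \<sigma>"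
    unfolding block_min_def using block_of_in[OF partition] by blast
  show "Min ` \<sigma> \<subseteq> block_min \<sigma> ` A"
    using block_min_eq Min_block_in partition_on_block_subset[OF partition] by force
qed

lemma strict_mono_on_min_rank: "strict_mono_on (Min ` \<sigma>) (min_rank \<sigma>)"
  unfolding min_rank_def
proof (rule strict_mono_onI)
  fix m m' assume "m \<in> Min ` \<sigma>" "m' \<in> Min ` \<sigma>" "m < m'"
  then have "{D \<in> \<sigma>. Min D \<le> m} \<subset> {D \<in> \<sigma>. Min D \<le> m'}"
    by force
  then show "card {D \<in> \<sigma>. Min D \<le> m} < card {D \<in> \<sigma>. Min D \<le> m'}"
    using finite_elements[OF finite partition] by (simp add: psubset_card_mono)
qed

lemma block_min_Min: "C \<in> \<sigma> \<Longrightarrow> block_min \<sigma> (Min C) = Min C"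
  using block_min_eq Min_block_in by blast

lemma one_le_blockidx: "C \<in> \<sigma> \<Longrightarrow> 1 \<le> blockidx \<sigma> C"
  unfolding blockidx_def using finite_elements[OF finite partition]
  by (auto simp: Suc_le_eq card_gt_0_iff)

lemma blockidx_less_iff: "C \<in> \<sigma> \<Longrightarrow> D \<in> \<sigma> \<Longrightarrow> blockidx \<sigma> C < blockidx \<sigma> D \<longleftrightarrow> Min C < Min D"
  unfolding blockidx_eq_min_rank using strict_mono_on_less[OF strict_mono_on_min_rank] by blast

end

locale interval_partition = nat_partition "{1..n}" \<sigma> for n :: nat and \<sigma> :: "nat set set"

lemma interval_partition_iff: "interval_partition n \<sigma> \<longleftrightarrow> \<sigma> \<in> Pi_n n"
  by (simp add: interval_partition_def nat_partition_def Pi_n_def)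

lemma interval_partitionI: "partition_on {1..n} \<sigma> \<Longrightarrow> interval_partition n \<sigma>"
  by (simp add: interval_partition_def nat_partition_def)

section \<open>The five avoidance classes\<close>

context interval_partition
begin

lemma contains_rgf_iff:
  "contains (rgf \<sigma> n) [u, v, w] \<longleftrightarrow>
    (\<exists>i j k. 1 \<le> i \<and> i < j \<and> j < k \<and> k \<le> n \<and>
       std [block_min \<sigma> i, block_min \<sigma> j, block_min \<sigma> k] = [u, v, w])"
proof -
  have std_rank: "std [min_rank \<sigma> (block_min \<sigma> i), min_rank \<sigma> (block_min \<sigma> j), min_rank \<sigma> (block_min \<sigma> k)] =
      std [block_min \<sigma> i, block_min \<sigma> j, block_min \<sigma> k]"
    if "1 \<le> i" "i < j" "j < k" "k < Suc n" for i j k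
  proof -
    let ?s = "[block_min \<sigma> i, block_min \<sigma> j, block_min \<sigma> k]"
    have "set ?s \<subseteq> Min ` \<sigma>"
      using that block_min_image by force
    then have "std (map (min_rank \<sigma>) ?s) = std ?s"
      using std_map_strict_mono_on monotone_on_subset[OF strict_mono_on_min_rank] by blast
    then show ?thesis
      by simp
  qed
  show ?thesis
    unfolding rgf_eq_map_min_rank contains_length3_iff
    by (intro ex_cong1) (use std_rank in \<open>auto simp: less_Suc_eq_le\<close>)
qed

lemma block_min_ge_1: "x \<in> {1..n} \<Longrightarrow> 1 \<le> block_min \<sigma> x"
  using block_min_in by simp

lemma block_min_1: "1 \<le> n \<Longrightarrow> block_min \<sigma> 1 = 1"
  using block_min_le[of 1] block_min_ge_1[of 1] by simp

lemma blocks_Min_ge_1: "C \<in> \<sigma> \<Longrightarrow> 1 \<le> Min C"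
  using Min_block_in partition_on_block_subset[OF partition] by fastforce

lemma Min_eq_1_iff: "C \<in> \<sigma> \<Longrightarrow> Min C = 1 \<longleftrightarrow> 1 \<in> C"
  using Min_block_in Min_le[OF finite_block] blocks_Min_ge_1 by (metis le_antisym)

lemma avoids_1_2_3_iff: "\<not> contains (rgf \<sigma> n) [1, 2, 3] \<longleftrightarrow> card \<sigma> \<le> 2"
proof -
  have "contains (rgf \<sigma> n) [1, 2, 3] \<longleftrightarrow>
      (\<exists>i j k. 1 \<le> i \<and> i < j \<and> j < k \<and> k \<le> n \<and>
        block_min \<sigma> i < block_min \<sigma> j \<and> block_min \<sigma> j < block_min \<sigma> k)"
    by (simp only: contains_rgf_iff std_eq_123_iff)
  also have "\<dots> \<longleftrightarrow> (\<exists>a\<in>Min ` \<sigma>. \<exists>b\<in>Min ` \<sigma>. \<exists>c\<in>Min ` \<sigma>. a < b \<and> b < c)"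
  proof
    assume "\<exists>i j k. 1 \<le> i \<and> i < j \<and> j < k \<and> k \<le> n \<and>
        block_min \<sigma> i < block_min \<sigma> j \<and> block_min \<sigma> j < block_min \<sigma> k"
    then obtain i j k where ijk: "1 \<le> i" "i < j" "j < k" "k \<le> n"
      and less: "block_min \<sigma> i < block_min \<sigma> j" "block_min \<sigma> j < block_min \<sigma> k"
      by blast
    from ijk have "block_min \<sigma> i \<in> Min ` \<sigma>" "block_min \<sigma> j \<in> Min ` \<sigma>" "block_min \<sigma> k \<in> Min ` \<sigma>"
      using block_min_image by auto
    with less show "\<exists>a\<in>Min ` \<sigma>. \<exists>b\<in>Min ` \<sigma>. \<exists>c\<in>Min ` \<sigma>. a < b \<and> b < c"
      by blast
  next
    assume "\<exists>a\<in>Min ` \<sigma>. \<exists>b\<in>Min ` \<sigma>. \<exists>c\<in>Min ` \<sigma>. a < b \<and> b < c"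
    then obtain a b c where abc: "{a, b, c} \<subseteq> Min ` \<sigma>" "a < b" "b < c"
      by blast
    have "m \<in> {1..n} \<and> block_min \<sigma> m = m" if "m \<in> Min ` \<sigma>" for m
      using that block_min_Min Min_block_in partition_on_block_subset[OF partition] by blast
    with abc show "\<exists>i j k. 1 \<le> i \<and> i < j \<and> j < k \<and> k \<le> n \<and>
        block_min \<sigma> i < block_min \<sigma> j \<and> block_min \<sigma> j < block_min \<sigma> k"
      by (intro exI[of _ a] exI[of _ b] exI[of _ c]) auto
  qed
  also have "\<dots> \<longleftrightarrow> 3 \<le> card \<sigma>"
    using card_ge_3_iff[of "Min ` \<sigma>"] card_image[OF inj_on_Min_blocks]
      finite_elements[OF finite partition] by simp
  finally show ?thesis
    by linarith
qed

lemma avoids_123_iff: "\<not> contains (rgf \<sigma> n) [1, 1, 1] \<longleftrightarrow> is_matching \<sigma>"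
proof -
  have "contains (rgf \<sigma> n) [1, 1, 1] \<longleftrightarrow>
      (\<exists>i j k. 1 \<le> i \<and> i < j \<and> j < k \<and> k \<le> n \<and>
        block_min \<sigma> i = block_min \<sigma> j \<and> block_min \<sigma> j = block_min \<sigma> k)"
    by (simp only: contains_rgf_iff std_eq_111_iff)
  also have "\<dots> \<longleftrightarrow> (\<exists>C\<in>\<sigma>. \<exists>a\<in>C. \<exists>b\<in>C. \<exists>c\<in>C. a < b \<and> b < c)"
  proof
    assume "\<exists>i j k. 1 \<le> i \<and> i < j \<and> j < k \<and> k \<le> n \<and>
        block_min \<sigma> i = block_min \<sigma> j \<and> block_min \<sigma> j = block_min \<sigma> k"
    then obtain i j k where ijk: "1 \<le> i" "i < j" "j < k" "k \<le> n"
      and eq: "block_min \<sigma> i = block_min \<sigma> k" "block_min \<sigma> j = block_min \<sigma> k"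
      by auto
    then have "{i, j, k} \<subseteq> block_of \<sigma> {k}"
      using block_min_eq_iff mem_block_of[OF partition] by auto
    with ijk show "\<exists>C\<in>\<sigma>. \<exists>a\<in>C. \<exists>b\<in>C. \<exists>c\<in>C. a < b \<and> b < c"
      using block_of_in[OF partition, of k] by auto
  next
    assume "\<exists>C\<in>\<sigma>. \<exists>a\<in>C. \<exists>b\<in>C. \<exists>c\<in>C. a < b \<and> b < c"
    then obtain C a b c where "C \<in> \<sigma>" "{a, b, c} \<subseteq> C" "a < b" "b < c"
      by blast
    moreover from this have "{a, b, c} \<subseteq> {1..n}"
      using partition_on_block_subset[OF partition] by blast
    ultimately show "\<exists>i j k. 1 \<le> i \<and> i < j \<and> j < k \<and> k \<le> n \<and>
        block_min \<sigma> i = block_min \<sigma> j \<and> block_min \<sigma> j = block_min \<sigma> k"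
      using block_min_eq by (intro exI[of _ a] exI[of _ b] exI[of _ c]) auto
  qed
  also have "\<dots> \<longleftrightarrow> \<not> is_matching \<sigma>"
  proof -
    have "(\<exists>a\<in>C. \<exists>b\<in>C. \<exists>c\<in>C. a < b \<and> b < c) \<longleftrightarrow> \<not> card C \<le> 2" if "C \<in> \<sigma>" for C
      using card_ge_3_iff[OF finite_block[OF that]] by linarith
    then show ?thesis
      unfolding is_matching_def by blast
  qed
  finally show ?thesis
    by simp
qed

lemma blockidx_ge_2_iff:
  assumes "C \<in> \<sigma>"
  shows "2 \<le> blockidx \<sigma> C \<longleftrightarrow> 1 \<notin> C"
proof
  assume "2 \<le> blockidx \<sigma> C"
  show "1 \<notin> C"
  proof
    assume "1 \<in> C"
    then have "Min C = 1"
      using Min_eq_1_iff[OF assms] by simp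
    have "D = C" if "D \<in> \<sigma>" "Min D \<le> Min C" for D
      using that assms \<open>Min C = 1\<close> blocks_Min_ge_1[OF that(1)] inj_onD[OF inj_on_Min_blocks] by simp
    then have "{D \<in> \<sigma>. Min D \<le> Min C} = {C}"
      using assms by auto
    with \<open>2 \<le> blockidx \<sigma> C\<close> show False
      by (simp add: blockidx_def)
  qed
next
  assume "1 \<notin> C"
  have "1 \<in> {1..n}"
    using assms Min_block_in partition_on_block_subset[OF partition] by fastforce
  have "Min C \<noteq> 1"
    using \<open>1 \<notin> C\<close> Min_eq_1_iff[OF assms] by simp
  moreover have "block_min \<sigma> 1 = 1"
    using block_min_1 \<open>1 \<in> {1..n}\<close> by simp
  ultimately have "block_min \<sigma> 1 < Min C"
    using blocks_Min_ge_1[OF assms] by simp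
  then have "blockidx \<sigma> (block_of \<sigma> {1}) < blockidx \<sigma> C"
    using blockidx_less_iff[OF block_of_in[OF partition \<open>1 \<in> {1..n}\<close>] assms]
    by (simp add: block_min_def)
  then show "2 \<le> blockidx \<sigma> C"
    using one_le_blockidx[OF block_of_in[OF partition \<open>1 \<in> {1..n}\<close>]] by linarith
qed

lemma non_singleton_block_if_pattern_122:
  assumes ijk: "1 \<le> i" "i < j" "j < k" "k \<le> n"
    and less: "block_min \<sigma> i < block_min \<sigma> j" and eq: "block_min \<sigma> j = block_min \<sigma> k"
  shows "\<exists>C\<in>\<sigma>. 1 \<notin> C \<and> card C \<noteq> 1"
proof -
  let ?C = "block_of \<sigma> {k}"
  have C: "?C \<in> \<sigma>" "j \<in> ?C" "k \<in> ?C"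
    using ijk eq block_of_in[OF partition] mem_block_of[OF partition] block_min_eq_iff by auto
  then have "card ?C \<noteq> 1"
    using \<open>j < k\<close> by (auto simp: card_1_singleton_iff)
  moreover have "1 \<notin> ?C"
  proof
    assume "1 \<in> ?C"
    then have "block_min \<sigma> j = block_min \<sigma> 1"
      using C block_min_eq[OF C(1)] by simp
    with less ijk block_min_1 block_min_ge_1[of i] show False
      by simp
  qed
  ultimately show ?thesis
    using C(1) by blast
qed

lemma pattern_122_if_non_singleton_block:
  assumes C: "C \<in> \<sigma>" "1 \<notin> C" "card C \<noteq> 1"
  shows "\<exists>i j k. 1 \<le> i \<and> i < j \<and> j < k \<and> k \<le> n \<and>
    block_min \<sigma> i < block_min \<sigma> j \<and> block_min \<sigma> j = block_min \<sigma> k"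
proof -
  have "C \<noteq> {Min C}"
    using C(3) by (auto simp: card_1_singleton_iff)
  then obtain k where k: "k \<in> C" "k \<noteq> Min C"
    using Min_block_in[OF C(1)] by blast
  have "Min C < k"
    using k Min_le[OF finite_block[OF C(1)]] by fastforce
  moreover have "Min C \<noteq> 1"
    using C(2) Min_eq_1_iff[OF C(1)] by simp
  then have "1 < Min C"
    using blocks_Min_ge_1[OF C(1)] by simp
  moreover have "k \<le> n"
    using k(1) partition_on_block_subset[OF partition C(1)] by auto
  moreover have "block_min \<sigma> 1 = 1" "block_min \<sigma> (Min C) = Min C" "block_min \<sigma> k = Min C"
    using block_min_1 \<open>k \<le> n\<close> \<open>Min C < k\<close> block_min_Min[OF C(1)] block_min_eq[OF C(1) k(1)]
    by auto
  ultimately show ?thesis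
    by (intro exI[of _ 1] exI[of _ "Min C"] exI[of _ k]) auto
qed

lemma avoids_1_23_iff:
  "\<not> contains (rgf \<sigma> n) [1, 2, 2] \<longleftrightarrow> (\<forall>C\<in>\<sigma>. 1 \<notin> C \<longrightarrow> card C = 1)"
proof -
  have "contains (rgf \<sigma> n) [1, 2, 2] \<longleftrightarrow>
      (\<exists>i j k. 1 \<le> i \<and> i < j \<and> j < k \<and> k \<le> n \<and>
        block_min \<sigma> i < block_min \<sigma> j \<and> block_min \<sigma> j = block_min \<sigma> k)"
    by (simp only: contains_rgf_iff std_eq_122_iff)
  also have "\<dots> \<longleftrightarrow> (\<exists>C\<in>\<sigma>. 1 \<notin> C \<and> card C \<noteq> 1)"
    using non_singleton_block_if_pattern_122 pattern_122_if_non_singleton_block by blast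
  finally show ?thesis
    by blast
qed

lemma avoids_1_23_iff_blockidx:
  "\<not> contains (rgf \<sigma> n) [1, 2, 2] \<longleftrightarrow> (\<forall>C\<in>\<sigma>. 2 \<le> blockidx \<sigma> C \<longrightarrow> card C = 1)"
  using avoids_1_23_iff blockidx_ge_2_iff by auto

lemma block_gap_if_pattern_121:
  assumes ijk: "1 \<le> i" "i < j" "j < k" "k \<le> n"
    and eq: "block_min \<sigma> i = block_min \<sigma> k" and less: "block_min \<sigma> i < block_min \<sigma> j"
  shows "\<exists>C\<in>\<sigma>. \<exists>x. Min C \<le> x \<and> x \<le> Max C \<and> x \<notin> C"
proof -
  let ?C = "block_of \<sigma> {k}"
  have ijk_range: "i \<in> {1..n}" "j \<in> {1..n}" "k \<in> {1..n}"
    using ijk by auto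
  have C: "?C \<in> \<sigma>" "i \<in> ?C" "k \<in> ?C" "j \<notin> ?C"
    using ijk_range eq less block_of_in[OF partition] mem_block_of[OF partition]
      block_min_eq_iff[of i k] block_min_eq_iff[of j k] by auto
  moreover have "Min ?C \<le> j" "j \<le> Max ?C"
    using C ijk finite_block[OF C(1)] Min_le[of ?C i] Max_ge[of ?C k] by linarith+
  ultimately show ?thesis
    by blast
qed

lemma pattern_121_if_block_gap:
  assumes C: "C \<in> \<sigma>" and x: "Min C \<le> x" "x \<le> Max C" "x \<notin> C"
  shows "\<exists>i j k. 1 \<le> i \<and> i < j \<and> j < k \<and> k \<le> n \<and>
    block_min \<sigma> i = block_min \<sigma> k \<and> block_min \<sigma> i < block_min \<sigma> j"
proof -
  have MinMax: "Min C \<in> C" "Max C \<in> C" "C \<subseteq> {1..n}"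
    using Min_block_in[OF C] Max_in[OF finite_block[OF C] partition_on_block_nonempty[OF partition C]]
      partition_on_block_subset[OF partition C] by auto
  moreover have "Min C \<noteq> x" "Max C \<noteq> x"
    using MinMax x(3) by auto
  ultimately have range: "Min C < x" "x < Max C" "x \<in> {1..n}"
    using x by (simp_all, force)
  have bm: "block_min \<sigma> (Min C) = Min C" "block_min \<sigma> (Max C) = Min C"
    using block_min_eq[OF C] MinMax by auto
  have "block_min \<sigma> x \<noteq> Min C"
    using block_min_eq_Min_iff[OF range(3) C] x(3) by simp
  then consider "Min C < block_min \<sigma> x" | "block_min \<sigma> x < Min C"
    by linarith
  then show ?thesis
  proof cases
    case 1
    with range bm MinMax show ?thesis
      by (intro exI[of _ "Min C"] exI[of _ x] exI[of _ "Max C"]) auto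
  next
    case 2
    moreover have "1 \<le> block_min \<sigma> x" "block_min \<sigma> (block_min \<sigma> x) = block_min \<sigma> x"
      using block_min_ge_1 block_min_block_min range(3) by auto
    ultimately show ?thesis
      using range bm MinMax by (intro exI[of _ "block_min \<sigma> x"] exI[of _ "Min C"] exI[of _ x]) auto
  qed
qed

lemma avoids_13_2_iff: "\<not> contains (rgf \<sigma> n) [1, 2, 1] \<longleftrightarrow> layered \<sigma>"
proof -
  have "contains (rgf \<sigma> n) [1, 2, 1] \<longleftrightarrow>
      (\<exists>i j k. 1 \<le> i \<and> i < j \<and> j < k \<and> k \<le> n \<and>
        block_min \<sigma> i = block_min \<sigma> k \<and> block_min \<sigma> i < block_min \<sigma> j)"
    by (simp only: contains_rgf_iff std_eq_121_iff)
  also have "\<dots> \<longleftrightarrow> (\<exists>C\<in>\<sigma>. \<exists>x. Min C \<le> x \<and> x \<le> Max C \<and> x \<notin> C)"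
    using block_gap_if_pattern_121 pattern_121_if_block_gap by blast
  also have "\<dots> \<longleftrightarrow> \<not> layered \<sigma>"
  proof -
    have "(\<exists>a b. C = {a..b}) \<longleftrightarrow> \<not> (\<exists>x. Min C \<le> x \<and> x \<le> Max C \<and> x \<notin> C)" if "C \<in> \<sigma>" for C
      using ex_atLeastAtMost_eq_iff[OF finite_block[OF that] partition_on_block_nonempty[OF partition that]]
      by blast
    then show ?thesis
      unfolding layered_def by blast
  qed
  finally show ?thesis
    by blast
qed

end

definition occurs_112 :: "(nat \<Rightarrow> nat) \<Rightarrow> nat \<Rightarrow> bool" where
  "occurs_112 f n \<longleftrightarrow> (\<exists>i j l. 1 \<le> i \<and> i < j \<and> j < l \<and> l \<le> n \<and> f i = f j \<and> f j < f l)"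

lemma antimono_after_repeat_if_not_occurs_112:
  assumes "\<not> occurs_112 f n" "f x \<in> {1..x}" "f (f x) = f x" "f x < x" "x < y" "y \<le> n"
  shows "f y \<le> f x"
proof (rule ccontr)
  assume "\<not> f y \<le> f x"
  with assms(2-6) have "occurs_112 f n"
    unfolding occurs_112_def by (intro exI[of _ "f x"] exI[of _ x] exI[of _ y]) auto
  with assms(1) show False ..
qed

lemma fixed_then_antimono_if_not_occurs_112:
  assumes below: "\<And>x. x \<in> {1..n} \<Longrightarrow> f x \<in> {1..x}"
    and idem: "\<And>x. x \<in> {1..n} \<Longrightarrow> f (f x) = f x"
    and no_112: "\<not> occurs_112 f n"
  shows "\<exists>k\<le>n. (\<forall>x\<in>{1..k}. f x = x) \<and> (\<forall>x y. k < x \<longrightarrow> x \<le> y \<longrightarrow> y \<le> n \<longrightarrow> f y \<le> f x)"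
proof (cases "\<forall>x\<in>{1..n}. f x = x")
  case True
  then show ?thesis
    by auto
next
  case False
  have step: "f y \<le> f x" if "x \<in> {1..n}" "f x < x" "x < y" "y \<le> n" for x y
    using antimono_after_repeat_if_not_occurs_112[OF no_112 below[OF that(1)] idem[OF that(1)] that(2-4)] .
  define p where "p = (LEAST x. x \<in> {1..n} \<and> f x \<noteq> x)"
  have p: "p \<in> {1..n}" "f p \<noteq> p"
    using LeastI_ex[of "\<lambda>x. x \<in> {1..n} \<and> f x \<noteq> x"] False unfolding p_def by blast+
  then have "f p < p"
    using below[of p] by auto
  have repeat: "f x < x" if "p \<le> x" "x \<le> n" for x
  proof (cases "x = p")
    case False
    then show ?thesis
      using step[OF p(1) \<open>f p < p\<close>, of x] that \<open>f p < p\<close> by simp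
  qed (use \<open>f p < p\<close> in simp)
  show ?thesis
  proof (intro exI[of _ "p - 1"] conjI ballI allI impI)
    show "p - 1 \<le> n"
      using p(1) by auto
    show "f x = x" if "x \<in> {1..p - 1}" for x
      using not_less_Least[of x "\<lambda>x. x \<in> {1..n} \<and> f x \<noteq> x"] that p(1) unfolding p_def by force
    show "f y \<le> f x" if "p - 1 < x" "x \<le> y" "y \<le> n" for x y
      using step[of x y] repeat[of x] that p(1) by (cases "x = y") auto
  qed
qed

lemma not_occurs_112_if_fixed_then_antimono:
  assumes fixed: "\<forall>x\<in>{1..k}. f x = x"
    and antimono: "\<forall>x y. k < x \<longrightarrow> x \<le> y \<longrightarrow> y \<le> n \<longrightarrow> f y \<le> f x"
  shows "\<not> occurs_112 f n"
proof
  assume "occurs_112 f n"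
  then obtain i j l where ijl: "1 \<le> i" "i < j" "j < l" "l \<le> n" "f i = f j" "f j < f l"
    unfolding occurs_112_def by blast
  show False
  proof (cases "j \<le> k")
    case True
    then have "f i = i" "f j = j"
      using fixed ijl by auto
    with ijl show False
      by simp
  next
    case False
    then have "f l \<le> f j"
      using antimono ijl by auto
    with ijl show False
      by simp
  qed
qed

lemma not_occurs_112_iff:
  assumes "\<And>x. x \<in> {1..n} \<Longrightarrow> f x \<in> {1..x}" "\<And>x. x \<in> {1..n} \<Longrightarrow> f (f x) = f x"
  shows "\<not> occurs_112 f n \<longleftrightarrow>
    (\<exists>k\<le>n. (\<forall>x\<in>{1..k}. f x = x) \<and> (\<forall>x y. k < x \<longrightarrow> x \<le> y \<longrightarrow> y \<le> n \<longrightarrow> f y \<le> f x))"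
  using fixed_then_antimono_if_not_occurs_112[OF assms] not_occurs_112_if_fixed_then_antimono by blast

lemma mem_restr_iff: "D \<in> restr \<sigma> T \<longleftrightarrow> (\<exists>C\<in>\<sigma>. D = C \<inter> T \<and> C \<inter> T \<noteq> {})"
  unfolding restr_def by blast

lemma Bidx_Int:
  assumes "partition_on A \<sigma>" "C \<in> \<sigma>" "C \<inter> T \<noteq> {}"
  shows "Bidx \<sigma> (C \<inter> T) = blockidx \<sigma> C"
  unfolding Bidx_def using block_of_eq[OF assms(1,2)] assms(3) by simp

context interval_partition
begin

lemma Bidx_Int_less_iff:
  assumes "C \<in> \<sigma>" "D \<in> \<sigma>" "C \<inter> T \<noteq> {}" "D \<inter> T \<noteq> {}"
  shows "Bidx \<sigma> (C \<inter> T) < Bidx \<sigma> (D \<inter> T) \<longleftrightarrow> Min C < Min D"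
  using Bidx_Int[OF partition] blockidx_less_iff assms by simp

lemma contains_12_3_iff: "contains (rgf \<sigma> n) [1, 1, 2] \<longleftrightarrow> occurs_112 (block_min \<sigma>) n"
  by (simp only: contains_rgf_iff std_eq_112_iff occurs_112_def)

lemma fixed_if_restr_singletons:
  assumes k: "k \<le> n" and singletons: "restr \<sigma> {1..k} = {{i} | i. i \<in> {1..k}}" and x: "x \<in> {1..k}"
  shows "block_min \<sigma> x = x"
proof -
  let ?C = "block_of \<sigma> {x}"
  have "x \<in> {1..n}"
    using x k by simp
  then have both: "block_min \<sigma> x \<in> ?C \<inter> {1..k}" "x \<in> ?C \<inter> {1..k}"
    using x block_min_mem block_min_le[of x] block_min_ge_1 mem_block_of[OF partition] by auto
  then have "?C \<inter> {1..k} \<in> restr \<sigma> {1..k}"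
    using block_of_in[OF partition \<open>x \<in> {1..n}\<close>] unfolding mem_restr_iff by blast
  then obtain i where "?C \<inter> {1..k} = {i}"
    unfolding singletons by blast
  with both show ?thesis
    by (metis singletonD)
qed

lemma restr_singletons_if_fixed:
  assumes k: "k \<le> n" and fixed: "\<forall>x\<in>{1..k}. block_min \<sigma> x = x"
  shows "restr \<sigma> {1..k} = {{i} | i. i \<in> {1..k}}"
proof -
  have same: "y = x" if "C \<in> \<sigma>" "x \<in> C \<inter> {1..k}" "y \<in> C \<inter> {1..k}" for C x y
  proof -
    have "block_min \<sigma> x = Min C" "block_min \<sigma> y = Min C"
      using that block_min_eq by auto
    moreover have "block_min \<sigma> x = x" "block_min \<sigma> y = y"
      using that fixed by auto
    ultimately show ?thesis
      by simp
  qed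
  show ?thesis
  proof (intro equalityI subsetI)
    fix D assume "D \<in> restr \<sigma> {1..k}"
    then obtain C x where "C \<in> \<sigma>" "D = C \<inter> {1..k}" "x \<in> D"
      unfolding mem_restr_iff by blast
    with same have "D = {x}" "x \<in> {1..k}"
      by blast+
    then show "D \<in> {{i} | i. i \<in> {1..k}}"
      by blast
  next
    fix D assume "D \<in> {{i} | i. i \<in> {1..k}}"
    then obtain x where x: "D = {x}" "x \<in> {1..k}"
      by blast
    then have "x \<in> {1..n}"
      using k by simp
    let ?C = "block_of \<sigma> {x}"
    have "?C \<inter> {1..k} = {x}"
      using same[OF block_of_in[OF partition \<open>x \<in> {1..n}\<close>]] mem_block_of[OF partition \<open>x \<in> {1..n}\<close>] x(2)
      by blast
    then show "D \<in> restr \<sigma> {1..k}"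
      unfolding mem_restr_iff using x(1) block_of_in[OF partition \<open>x \<in> {1..n}\<close>] by auto
  qed
qed

lemma restr_singletons_iff:
  "k \<le> n \<Longrightarrow> restr \<sigma> {1..k} = {{i} | i. i \<in> {1..k}} \<longleftrightarrow> (\<forall>x\<in>{1..k}. block_min \<sigma> x = x)"
  using fixed_if_restr_singletons restr_singletons_if_fixed by blast

lemma layered_restr_if_antimono:
  assumes antimono: "\<forall>x y. k < x \<longrightarrow> x \<le> y \<longrightarrow> y \<le> n \<longrightarrow> block_min \<sigma> y \<le> block_min \<sigma> x"
  shows "layered (restr \<sigma> {k+1..n})"
  unfolding layered_def
proof
  fix D assume "D \<in> restr \<sigma> {k+1..n}"
  then obtain C where C: "C \<in> \<sigma>" "D = C \<inter> {k+1..n}" "D \<noteq> {}"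
    unfolding mem_restr_iff by blast
  have "finite D"
    using C(2) by simp
  then have ends: "Min D \<in> C \<inter> {k+1..n}" "Max D \<in> C \<inter> {k+1..n}"
    using C(2,3) Min_in Max_in by blast+
  show "\<exists>a b. D = {a..b}"
    unfolding ex_atLeastAtMost_eq_iff[OF \<open>finite D\<close> C(3)]
  proof (intro allI impI)
    fix x assume x: "Min D \<le> x" "x \<le> Max D"
    then have "x \<in> {k+1..n}"
      using ends by auto
    have "block_min \<sigma> x \<le> block_min \<sigma> (Min D)" "block_min \<sigma> (Max D) \<le> block_min \<sigma> x"
      using antimono x ends \<open>x \<in> {k+1..n}\<close> by auto
    moreover have "block_min \<sigma> (Min D) = Min C" "block_min \<sigma> (Max D) = Min C"
      using block_min_eq[OF C(1)] ends by auto
    ultimately have "block_min \<sigma> x = Min C"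
      by simp
    then show "x \<in> D"
      using block_min_eq_Min_iff[OF _ C(1)] \<open>x \<in> {k+1..n}\<close> C(2) by auto
  qed
qed

lemma restr_decreasing_if_antimono:
  assumes antimono: "\<forall>x y. k < x \<longrightarrow> x \<le> y \<longrightarrow> y \<le> n \<longrightarrow> block_min \<sigma> y \<le> block_min \<sigma> x"
  shows "\<forall>D\<in>restr \<sigma> {k+1..n}. \<forall>D'\<in>restr \<sigma> {k+1..n}. Min D < Min D' \<longrightarrow> Bidx \<sigma> D > Bidx \<sigma> D'"
proof (intro ballI impI)
  fix D D' assume "D \<in> restr \<sigma> {k+1..n}" "D' \<in> restr \<sigma> {k+1..n}" and less: "Min D < Min D'"
  then obtain C C' where C: "C \<in> \<sigma>" "D = C \<inter> {k+1..n}" "D \<noteq> {}"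
    and C': "C' \<in> \<sigma>" "D' = C' \<inter> {k+1..n}" "D' \<noteq> {}"
    unfolding mem_restr_iff by blast
  have mins: "Min D \<in> C \<inter> {k+1..n}" "Min D' \<in> C' \<inter> {k+1..n}"
    using C C' Min_in[of D] Min_in[of D'] by auto
  then have "block_min \<sigma> (Min D') \<le> block_min \<sigma> (Min D)"
    using antimono less by auto
  then have "Min C' \<le> Min C"
    using mins block_min_eq[OF C(1)] block_min_eq[OF C'(1)] by simp
  moreover have "C \<noteq> C'"
    using less C(2) C'(2) by auto
  then have "Min C \<noteq> Min C'"
    using inj_onD[OF inj_on_Min_blocks] C(1) C'(1) by blast
  ultimately have "Min C' < Min C"
    by simp
  then show "Bidx \<sigma> D' < Bidx \<sigma> D"
    using Bidx_Int_less_iff C C' by simp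
qed

lemma antimono_if_restr_layered_decreasing:
  assumes layered: "layered (restr \<sigma> {k+1..n})"
    and decreasing: "\<forall>D\<in>restr \<sigma> {k+1..n}. \<forall>D'\<in>restr \<sigma> {k+1..n}. Min D < Min D' \<longrightarrow> Bidx \<sigma> D > Bidx \<sigma> D'"
  shows "\<forall>x y. k < x \<longrightarrow> x \<le> y \<longrightarrow> y \<le> n \<longrightarrow> block_min \<sigma> y \<le> block_min \<sigma> x"
proof (intro allI impI)
  fix x y assume xy: "k < x" "x \<le> y" "y \<le> n"
  let ?C = "block_of \<sigma> {x}" and ?C' = "block_of \<sigma> {y}"
  let ?D = "?C \<inter> {k+1..n}" and ?D' = "?C' \<inter> {k+1..n}"
  have "x \<in> {1..n}" "y \<in> {1..n}"
    using xy by auto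
  then have C: "?C \<in> \<sigma>" "?C' \<in> \<sigma>" and mem: "x \<in> ?D" "y \<in> ?D'"
    using xy block_of_in[OF partition] mem_block_of[OF partition] by auto
  then have D: "?D \<in> restr \<sigma> {k+1..n}" "?D' \<in> restr \<sigma> {k+1..n}"
    unfolding mem_restr_iff by blast+
  show "block_min \<sigma> y \<le> block_min \<sigma> x"
  proof (rule ccontr)
    assume "\<not> block_min \<sigma> y \<le> block_min \<sigma> x"
    then have "Min ?C < Min ?C'"
      by (simp add: block_min_def)
    then have "?C \<noteq> ?C'"
      by auto
    then have "?D \<inter> ?D' = {}"
      using partition_on_block_eq[OF partition C] by blast
    moreover have "Min ?D' \<le> Min ?D"
    proof (rule ccontr)
      assume "\<not> Min ?D' \<le> Min ?D"
      then have "Bidx \<sigma> ?D' < Bidx \<sigma> ?D"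
        using decreasing D by auto
      then have "Min ?C' < Min ?C"
        using Bidx_Int_less_iff[OF C(2,1)] mem by blast
      with \<open>Min ?C < Min ?C'\<close> show False
        by simp
    qed
    moreover obtain a b where ab: "?D' = {a..b}"
      using layered D(2) unfolding layered_def by blast
    moreover have "a \<le> Min ?D'" "y \<le> b"
      using mem(2) Min_in[of ?D'] unfolding ab by auto
    moreover have "Min ?D \<le> x"
      using mem(1) by simp
    ultimately have "x \<in> ?D'"
      using xy(2) unfolding ab by simp
    with \<open>?D \<inter> ?D' = {}\<close> mem(1) show False
      by blast
  qed
qed

lemma avoids_12_3_iff:
  "\<not> contains (rgf \<sigma> n) [1, 1, 2] \<longleftrightarrow>
    (\<exists>k\<le>n. restr \<sigma> {1..k} = {{i} | i. i \<in> {1..k}} \<and> layered (restr \<sigma> {k+1..n}) \<and>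
      (\<forall>D\<in>restr \<sigma> {k+1..n}. \<forall>D'\<in>restr \<sigma> {k+1..n}. Min D < Min D' \<longrightarrow> Bidx \<sigma> D > Bidx \<sigma> D'))"
proof -
  have "\<not> contains (rgf \<sigma> n) [1, 1, 2] \<longleftrightarrow>
      (\<exists>k\<le>n. (\<forall>x\<in>{1..k}. block_min \<sigma> x = x) \<and>
        (\<forall>x y. k < x \<longrightarrow> x \<le> y \<longrightarrow> y \<le> n \<longrightarrow> block_min \<sigma> y \<le> block_min \<sigma> x))"
    unfolding contains_12_3_iff
    using block_min_le block_min_ge_1 block_min_block_min by (intro not_occurs_112_iff) auto
  also have "\<dots> \<longleftrightarrow>
    (\<exists>k\<le>n. restr \<sigma> {1..k} = {{i} | i. i \<in> {1..k}} \<and> layered (restr \<sigma> {k+1..n}) \<and>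
      (\<forall>D\<in>restr \<sigma> {k+1..n}. \<forall>D'\<in>restr \<sigma> {k+1..n}. Min D < Min D' \<longrightarrow> Bidx \<sigma> D > Bidx \<sigma> D'))"
  proof (intro ex_cong1 conj_cong refl)
    fix k assume "k \<le> n"
    then show "(\<forall>x\<in>{1..k}. block_min \<sigma> x = x) \<longleftrightarrow> restr \<sigma> {1..k} = {{i} | i. i \<in> {1..k}}"
      using restr_singletons_iff by simp
    show "(\<forall>x y. k < x \<longrightarrow> x \<le> y \<longrightarrow> y \<le> n \<longrightarrow> block_min \<sigma> y \<le> block_min \<sigma> x) \<longleftrightarrow>
      layered (restr \<sigma> {k+1..n}) \<and>
      (\<forall>D\<in>restr \<sigma> {k+1..n}. \<forall>D'\<in>restr \<sigma> {k+1..n}. Min D < Min D' \<longrightarrow> Bidx \<sigma> D > Bidx \<sigma> D')"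
      using layered_restr_if_antimono restr_decreasing_if_antimono antimono_if_restr_layered_decreasing
      by blast
  qed
  finally show ?thesis .
qed

end

section \<open>Counting\<close>

lemma partition_on_single_block: "partition_on A ({A} - {{}})"
  by (cases "A = {}") (simp_all add: partition_on_empty partition_on_space)

lemma partition_on_card_le_1:
  assumes "partition_on A \<tau>" "finite \<tau>" "card \<tau> \<le> 1"
  shows "\<tau> = {A} - {{}}"
proof (cases "\<tau> = {}")
  case True
  then show ?thesis
    using partition_onD1[OF assms(1)] by simp
next
  case False
  then obtain C where "\<tau> = {C}"
    using assms(2,3) by (metis card_0_eq card_1_singleton_iff le_Suc_eq le_zero_eq One_nat_def)
  moreover from this have "A = C" "C \<noteq> {}"
    using partition_onD1[OF assms(1)] partition_onD3[OF assms(1)] by auto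
  ultimately show ?thesis
    by simp
qed

lemma partition_on_card_blocks_1:
  assumes "partition_on A \<tau>" "\<And>C. C \<in> \<tau> \<Longrightarrow> card C = 1"
  shows "\<tau> = (\<lambda>x. {x}) ` A"
proof (intro equalityI subsetI)
  fix C assume "C \<in> \<tau>"
  then obtain x where "C = {x}"
    using assms(2) card_1_singletonE by blast
  moreover have "x \<in> A"
    using partition_on_block_subset[OF assms(1) \<open>C \<in> \<tau>\<close>] calculation by simp
  ultimately show "C \<in> (\<lambda>x. {x}) ` A"
    by simp
next
  fix C assume "C \<in> (\<lambda>x. {x}) ` A"
  then obtain x where "C = {x}" "x \<in> A"
    by blast
  then obtain D where "D \<in> \<tau>" "x \<in> D"
    using partition_onD1[OF assms(1)] by blast
  moreover obtain y where "D = {y}"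
    using assms(2)[OF \<open>D \<in> \<tau>\<close>] by (rule card_1_singletonE)
  ultimately show "C \<in> \<tau>"
    using \<open>C = {x}\<close> by simp
qed

lemma Pi_n_1: "Pi_n 1 = {{{1}}}"
proof -
  have singleton: "\<sigma> = {{1}}" if "partition_on {1} \<sigma>" for \<sigma> :: "nat set set"
  proof -
    have "card C = 1" if "C \<in> \<sigma>" for C
    proof -
      have "C = {1}"
        using partition_on_block_subset[OF \<open>partition_on {1} \<sigma>\<close> that]
          partition_on_block_nonempty[OF \<open>partition_on {1} \<sigma>\<close> that] by blast
      then show ?thesis
        by simp
    qed
    then show ?thesis
      using partition_on_card_blocks_1[OF that] by simp
  qed
  show ?thesis
  proof (intro equalityI subsetI)
    show "\<sigma> \<in> {{{1}}}" if "\<sigma> \<in> Pi_n 1" for \<sigma>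
      using singleton[of \<sigma>] that by (simp add: Pi_n_def)
    show "\<sigma> \<in> Pi_n 1" if "\<sigma> \<in> {{{1}}}" for \<sigma>
      using that partition_on_space[of "{1::nat}"] by (simp add: Pi_n_def)
  qed
qed

lemma finite_Pi_n: "finite (Pi_n n)"
  unfolding Pi_n_def by (simp add: finitely_many_partition_on)

lemma card_subsets_containing_1:
  assumes "n \<ge> 1"
  shows "card {A. 1 \<in> A \<and> A \<subseteq> {1..n::nat}} = 2 ^ (n - 1)"
proof -
  have "bij_betw (insert 1) (Pow {2..n}) {A. 1 \<in> A \<and> A \<subseteq> {1..n::nat}}"
    by (rule bij_betw_byWitness[of _ "\<lambda>A. A - {1}"]) (use assms in auto)
  then show ?thesis
    using bij_betw_same_card by (fastforce simp: card_Pow)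
qed

lemma card_partitions_determined_by_block_of_1:
  assumes "n \<ge> 1" and "F \<subseteq> Pi_n n"
    and determined: "\<And>\<sigma>. \<sigma> \<in> F \<Longrightarrow> h (block_of \<sigma> {1}) = \<sigma>"
    and realized: "\<And>A. 1 \<in> A \<Longrightarrow> A \<subseteq> {1..n} \<Longrightarrow> h A \<in> F \<and> A \<in> h A"
  shows "card F = 2 ^ (n - 1)"
proof -
  have "bij_betw (\<lambda>\<sigma>. block_of \<sigma> {1}) F {A. 1 \<in> A \<and> A \<subseteq> {1..n}}"
  proof (rule bij_betw_byWitness[of _ h])
    show "\<forall>\<sigma>\<in>F. h (block_of \<sigma> {1}) = \<sigma>"
      using determined by blast
    show "\<forall>A\<in>{A. 1 \<in> A \<and> A \<subseteq> {1..n}}. block_of (h A) {1} = A"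
    proof
      fix A assume "A \<in> {A. 1 \<in> A \<and> A \<subseteq> {1..n}}"
      then have "partition_on {1..n} (h A)" "A \<in> h A" "1 \<in> A"
        using realized assms(2) by (auto simp: Pi_n_def)
      then show "block_of (h A) {1} = A"
        by (intro block_of_eq[of "{1..n}"]) auto
    qed
    show "(\<lambda>\<sigma>. block_of \<sigma> {1}) ` F \<subseteq> {A. 1 \<in> A \<and> A \<subseteq> {1..n}}"
    proof
      fix B assume "B \<in> (\<lambda>\<sigma>. block_of \<sigma> {1}) ` F"
      then obtain \<sigma> where "\<sigma> \<in> F" "B = block_of \<sigma> {1}"
        by blast
      moreover from this have partition: "partition_on {1..n} \<sigma>"
        using assms(2) by (auto simp: Pi_n_def)
      moreover have "1 \<in> {1..n}"
        using assms(1) by simp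
      ultimately show "B \<in> {A. 1 \<in> A \<and> A \<subseteq> {1..n}}"
        using block_of_in[OF partition] mem_block_of[OF partition] partition_on_block_subset[OF partition]
        by blast
    qed
    show "h ` {A. 1 \<in> A \<and> A \<subseteq> {1..n}} \<subseteq> F"
      using realized by blast
  qed
  then show ?thesis
    using card_subsets_containing_1[OF assms(1)] by (simp add: bij_betw_same_card)
qed

lemma card_partitions_at_most_2_blocks:
  assumes "n \<ge> 1"
  shows "card {\<sigma> \<in> Pi_n n. card \<sigma> \<le> 2} = 2 ^ (n - 1)"
proof (rule card_partitions_determined_by_block_of_1[where h = "\<lambda>A. insert A ({{1..n} - A} - {{}})"])
  fix \<sigma> assume "\<sigma> \<in> {\<sigma> \<in> Pi_n n. card \<sigma> \<le> 2}"
  then have partition: "partition_on {1..n} \<sigma>" and "card \<sigma> \<le> 2"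
    by (auto simp: Pi_n_def)
  let ?B = "block_of \<sigma> {1}"
  have B: "?B \<in> \<sigma>"
    using block_of_in[OF partition] assms by simp
  have "finite \<sigma>"
    using finite_elements[OF _ partition] by simp
  with B \<open>card \<sigma> \<le> 2\<close> have "card (\<sigma> - {?B}) \<le> 1"
    by simp
  then have "\<sigma> - {?B} = {{1..n} - ?B} - {{}}"
    using partition_on_card_le_1 partition_on_Diff_block[OF partition B] \<open>finite \<sigma>\<close> by blast
  with B show "insert ?B ({{1..n} - ?B} - {{}}) = \<sigma>"
    by blast
next
  fix A :: "nat set" assume A: "1 \<in> A" "A \<subseteq> {1..n}"
  have "partition_on ({1..n} - A) ({{1..n} - A} - {{}})"
    by (rule partition_on_single_block)
  then have "partition_on {1..n} (insert A ({{1..n} - A} - {{}}))"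
    using partition_on_insert_block[OF _ A(2)] A(1) by blast
  moreover have "card ({{1..n} - A} - {{}}) \<le> 1"
    by (cases "{1..n} - A = {}") simp_all
  then have "card (insert A ({{1..n} - A} - {{}})) \<le> 2"
    by (intro card_insert_le_m1) simp_all
  ultimately show "insert A ({{1..n} - A} - {{}}) \<in> {\<sigma> \<in> Pi_n n. card \<sigma> \<le> 2} \<and>
      A \<in> insert A ({{1..n} - A} - {{}})"
    by (simp add: Pi_n_def)
qed (use assms in auto)

lemma card_partitions_singletons_apart_from_1:
  assumes "n \<ge> 1"
  shows "card {\<sigma> \<in> Pi_n n. \<forall>C\<in>\<sigma>. 1 \<notin> C \<longrightarrow> card C = 1} = 2 ^ (n - 1)"
proof (rule card_partitions_determined_by_block_of_1[where h = "\<lambda>A. insert A ((\<lambda>x. {x}) ` ({1..n} - A))"])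
  fix \<sigma> assume "\<sigma> \<in> {\<sigma> \<in> Pi_n n. \<forall>C\<in>\<sigma>. 1 \<notin> C \<longrightarrow> card C = 1}"
  then have partition: "partition_on {1..n} \<sigma>" and singletons: "\<forall>C\<in>\<sigma>. 1 \<notin> C \<longrightarrow> card C = 1"
    by (auto simp: Pi_n_def)
  let ?B = "block_of \<sigma> {1}"
  have B: "?B \<in> \<sigma>" "1 \<in> ?B"
    using block_of_in[OF partition] mem_block_of[OF partition] assms by simp_all
  have "card C = 1" if "C \<in> \<sigma> - {?B}" for C
    using that singletons partition_on_block_eq[OF partition B(1)] B(2) by blast
  then have "\<sigma> - {?B} = (\<lambda>x. {x}) ` ({1..n} - ?B)"
    using partition_on_card_blocks_1 partition_on_Diff_block[OF partition B(1)] by blast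
  with B show "insert ?B ((\<lambda>x. {x}) ` ({1..n} - ?B)) = \<sigma>"
    by blast
next
  fix A :: "nat set" assume A: "1 \<in> A" "A \<subseteq> {1..n}"
  then have "partition_on {1..n} (insert A ((\<lambda>x. {x}) ` ({1..n} - A)))"
    using partition_on_insert_block[OF partition_on_singletons A(2)] by blast
  moreover have "\<forall>C\<in>insert A ((\<lambda>x. {x}) ` ({1..n} - A)). 1 \<notin> C \<longrightarrow> card C = 1"
    using A by auto
  ultimately show "insert A ((\<lambda>x. {x}) ` ({1..n} - A)) \<in> {\<sigma> \<in> Pi_n n. \<forall>C\<in>\<sigma>. 1 \<notin> C \<longrightarrow> card C = 1} \<and>
      A \<in> insert A ((\<lambda>x. {x}) ` ({1..n} - A))"
    by (simp add: Pi_n_def)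
qed (use assms in auto)

definition insert_into_block :: "nat \<Rightarrow> nat \<Rightarrow> nat set set \<Rightarrow> nat set set" where
  "insert_into_block x m \<tau> = insert (insert x (block_of \<tau> {m})) (\<tau> - {block_of \<tau> {m}})"

(* If x is alone in its block, this leaves the empty set as a block; it is only used when x is not. *)
definition remove_from_block :: "nat \<Rightarrow> nat set set \<Rightarrow> nat set set" where
  "remove_from_block x \<sigma> = insert (block_of \<sigma> {x} - {x}) (\<sigma> - {block_of \<sigma> {x}})"

context
  fixes A :: "nat set" and x :: nat
  assumes fresh: "x \<notin> A"
begin

lemma partition_on_insert_singleton:
  "partition_on A \<tau> \<Longrightarrow> partition_on (insert x A) (insert {x} \<tau>)"
  using partition_on_insert_block[of "insert x A" "{x}" \<tau>] fresh by simp

lemma insert_singleton_Diff: "partition_on A \<tau> \<Longrightarrow> insert {x} \<tau> - {{x}} = \<tau>"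
  using partition_on_block_subset fresh by fastforce

lemma
  assumes "partition_on A \<tau>" "m \<in> A"
  shows partition_on_insert_into_block: "partition_on (insert x A) (insert_into_block x m \<tau>)"
    and block_of_insert_into_block: "block_of (insert_into_block x m \<tau>) {x} = insert x (block_of \<tau> {m})"
    and remove_insert_into_block: "remove_from_block x (insert_into_block x m \<tau>) = \<tau>"
proof -
  let ?C = "block_of \<tau> {m}"
  have C: "?C \<in> \<tau>" "?C \<subseteq> A"
    using block_of_in[OF assms] partition_on_block_subset[OF assms(1)] by auto
  show partition: "partition_on (insert x A) (insert_into_block x m \<tau>)"
    unfolding insert_into_block_def
  proof (rule partition_on_insert_block)
    have "insert x A - insert x ?C = A - ?C"
      using fresh by blast
    then show "partition_on (insert x A - insert x ?C) (\<tau> - {?C})"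
      using partition_on_Diff_block[OF assms(1) C(1)] by simp
    show "insert x ?C \<subseteq> insert x A" "insert x ?C \<noteq> {}"
      using C(2) by blast+
  qed
  show block: "block_of (insert_into_block x m \<tau>) {x} = insert x ?C"
    using block_of_eq[OF partition] by (simp add: insert_into_block_def)
  have "x \<notin> ?C" "insert x ?C \<notin> \<tau>"
    using C fresh partition_on_block_subset[OF assms(1)] by auto
  then show "remove_from_block x (insert_into_block x m \<tau>) = \<tau>"
    unfolding remove_from_block_def block using C(1) by (auto simp: insert_into_block_def)
qed

lemma singleton_notin_insert_into_block:
  assumes "partition_on A \<tau>" "m \<in> A" "y \<in> {x, m}"
  shows "{y} \<notin> insert_into_block x m \<tau>"
proof
  let ?B = "insert x (block_of \<tau> {m})"
  assume "{y} \<in> insert_into_block x m \<tau>"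
  moreover have "?B \<in> insert_into_block x m \<tau>" "y \<in> ?B" "m \<in> ?B"
    using assms(3) mem_block_of[OF assms(1,2)] by (auto simp: insert_into_block_def)
  ultimately have "{y} = ?B"
    using partition_on_block_eq[OF partition_on_insert_into_block[OF assms(1,2)]] by blast
  with \<open>m \<in> ?B\<close> assms(2,3) fresh show False
    by auto
qed

lemma
  assumes "partition_on (insert x A) \<sigma>" "m \<in> block_of \<sigma> {x}" "m \<noteq> x"
  shows partition_on_remove_from_block: "partition_on A (remove_from_block x \<sigma>)"
    and insert_into_remove_from_block: "insert_into_block x m (remove_from_block x \<sigma>) = \<sigma>"
proof -
  let ?B = "block_of \<sigma> {x}"
  have "x \<in> insert x A"
    by simp
  then have B: "?B \<in> \<sigma>" "x \<in> ?B"
    using block_of_in[OF assms(1)] mem_block_of[OF assms(1)] by blast+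
  then have "?B \<subseteq> insert x A"
    using partition_on_block_subset[OF assms(1)] by blast
  show partition: "partition_on A (remove_from_block x \<sigma>)"
    unfolding remove_from_block_def
  proof (rule partition_on_insert_block)
    have "A - (?B - {x}) = insert x A - ?B"
      using fresh B(2) by blast
    then show "partition_on (A - (?B - {x})) (\<sigma> - {?B})"
      using partition_on_Diff_block[OF assms(1) B(1)] by simp
    show "?B - {x} \<subseteq> A" "?B - {x} \<noteq> {}"
      using \<open>?B \<subseteq> insert x A\<close> assms(2,3) by blast+
  qed
  have block: "block_of (remove_from_block x \<sigma>) {m} = ?B - {x}"
    using block_of_eq[OF partition] assms(2,3) by (simp add: remove_from_block_def)
  have "?B - {x} \<notin> \<sigma> - {?B}"
    using partition_on_block_eq[OF assms(1) _ B(1)] assms(2,3) by blast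
  then show "insert_into_block x m (remove_from_block x \<sigma>) = \<sigma>"
    unfolding insert_into_block_def block using B(1,2) by (auto simp: remove_from_block_def insert_absorb)
qed

end

lemma card_Un_images_doubling:
  assumes "finite S"
    and "\<And>s. s \<in> S \<Longrightarrow> f' (f s) = s" "\<And>s. s \<in> S \<Longrightarrow> g' (g s) = s"
    and "\<And>s t. s \<in> S \<Longrightarrow> t \<in> S \<Longrightarrow> f s \<noteq> g t"
  shows "card (f ` S \<union> g ` S) = 2 * card S"
proof -
  have "inj_on f S" "inj_on g S"
    using assms(2,3) by (metis inj_onI)+
  moreover have "f ` S \<inter> g ` S = {}"
    using assms(4) by blast
  ultimately show ?thesis
    using assms(1) by (simp add: card_Un_disjoint card_image)
qed

lemma card_eq_2_power_if_doubling:
  assumes "card (F 1) = 1" "\<And>n. 1 \<le> n \<Longrightarrow> card (F (Suc n)) = 2 * card (F n)" "1 \<le> n"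
  shows "card (F n) = 2 ^ (n - 1)"
  using assms(3)
proof (induction n rule: dec_induct)
  case base
  then show ?case
    using assms(1) by simp
next
  case (step m)
  then show ?case
    using assms(2)[OF step(1)] by (cases m) simp_all
qed

lemma layered_block_of_max:
  assumes "partition_on {1..N} \<sigma>" "layered \<sigma>" "1 \<le> N"
  obtains a where "block_of \<sigma> {N} = {a..N}" "a \<le> N"
proof -
  have "N \<in> {1..N}"
    using assms(3) by simp
  then have B: "block_of \<sigma> {N} \<in> \<sigma>" "N \<in> block_of \<sigma> {N}"
    using block_of_in[OF assms(1)] mem_block_of[OF assms(1)] by blast+
  then obtain a b where ab: "block_of \<sigma> {N} = {a..b}"
    using assms(2) unfolding layered_def by blast
  moreover have "b \<in> block_of \<sigma> {N}"
    using ab B(2) by auto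
  then have "b \<le> N"
    using partition_on_block_subset[OF assms(1) B(1)] by auto
  ultimately show ?thesis
    using that B(2) by (metis atLeastAtMost_iff order_antisym)
qed

lemma layered_insert_singleton: "layered \<tau> \<Longrightarrow> layered (insert {x} \<tau>)"
  unfolding layered_def by (metis atLeastAtMost_singleton insert_iff)

lemma layered_partition_Suc_cases:
  assumes partition: "partition_on {1..Suc n} \<sigma>" and "layered \<sigma>"
  obtains (singleton) \<tau> where "partition_on {1..n} \<tau>" "layered \<tau>" "\<sigma> = insert {Suc n} \<tau>"
    | (joined) \<tau> where "partition_on {1..n} \<tau>" "layered \<tau>" "\<sigma> = insert_into_block (Suc n) n \<tau>"
proof -
  have fresh: "Suc n \<notin> {1..n}" and interval: "insert (Suc n) {1..n} = {1..Suc n}"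
    by auto
  have "1 \<le> Suc n"
    by simp
  then obtain a where a: "block_of \<sigma> {Suc n} = {a..Suc n}" "a \<le> Suc n"
    using layered_block_of_max[OF partition \<open>layered \<sigma>\<close>] by blast
  note partition' = partition[folded interval]
  show ?thesis
  proof (cases "a = Suc n")
    case True
    then have "{Suc n} \<in> \<sigma>"
      using a block_of_in[OF partition'] by force
    then have "partition_on {1..n} (\<sigma> - {{Suc n}})"
      using partition_on_Diff_block[OF partition'] fresh by fastforce
    moreover have "layered (\<sigma> - {{Suc n}})"
      using \<open>layered \<sigma>\<close> unfolding layered_def by blast
    moreover have "\<sigma> = insert {Suc n} (\<sigma> - {{Suc n}})"
      using \<open>{Suc n} \<in> \<sigma>\<close> by blast
    ultimately show ?thesis
      by (rule singleton)
  next
    case False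
    then have "n \<in> block_of \<sigma> {Suc n}"
      using a by simp
    then have "partition_on {1..n} (remove_from_block (Suc n) \<sigma>)"
      and "\<sigma> = insert_into_block (Suc n) n (remove_from_block (Suc n) \<sigma>)"
      using partition_on_remove_from_block[OF fresh partition'] insert_into_remove_from_block[OF fresh partition']
      by auto
    moreover have "{a..Suc n} - {Suc n} = {a..n}"
      by auto
    then have "layered (remove_from_block (Suc n) \<sigma>)"
      using \<open>layered \<sigma>\<close> a(1) unfolding layered_def remove_from_block_def by auto
    ultimately show ?thesis
      using joined by blast
  qed
qed

lemma layered_insert_into_block_max:
  assumes "partition_on {1..n} \<tau>" "layered \<tau>" "1 \<le> n"
  shows "layered (insert_into_block (Suc n) n \<tau>)"
proof -
  obtain a where "block_of \<tau> {n} = {a..n}" "a \<le> n"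
    using layered_block_of_max[OF assms] by blast
  then have "insert (Suc n) (block_of \<tau> {n}) = {a..Suc n}"
    by auto
  then show ?thesis
    using assms(2) unfolding insert_into_block_def layered_def by auto
qed

lemma layered_partitions_Suc:
  assumes "1 \<le> n"
  defines "L \<equiv> \<lambda>n. {\<sigma> \<in> Pi_n n. layered \<sigma>}"
  shows "L (Suc n) = insert {Suc n} ` L n \<union> insert_into_block (Suc n) n ` L n"
proof (intro equalityI subsetI)
  fix \<sigma> assume "\<sigma> \<in> L (Suc n)"
  then have "partition_on {1..Suc n} \<sigma>" "layered \<sigma>"
    unfolding L_def Pi_n_def by auto
  then show "\<sigma> \<in> insert {Suc n} ` L n \<union> insert_into_block (Suc n) n ` L n"
    by (cases rule: layered_partition_Suc_cases) (unfold L_def Pi_n_def, blast+)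
next
  have fresh: "Suc n \<notin> {1..n}" and interval: "insert (Suc n) {1..n} = {1..Suc n}" and "n \<in> {1..n}"
    using assms by auto
  fix \<sigma> assume "\<sigma> \<in> insert {Suc n} ` L n \<union> insert_into_block (Suc n) n ` L n"
  then obtain \<tau> where \<tau>: "partition_on {1..n} \<tau>" "layered \<tau>"
    and cases: "\<sigma> = insert {Suc n} \<tau> \<or> \<sigma> = insert_into_block (Suc n) n \<tau>"
    unfolding L_def Pi_n_def by blast
  with partition_on_insert_singleton[OF fresh \<tau>(1)] layered_insert_singleton[OF \<tau>(2)]
    partition_on_insert_into_block[OF fresh \<tau>(1) \<open>n \<in> {1..n}\<close>] layered_insert_into_block_max[OF \<tau> assms(1)]
  show "\<sigma> \<in> L (Suc n)"
    unfolding L_def Pi_n_def interval by auto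
qed

lemma card_layered_partitions:
  assumes "1 \<le> n"
  shows "card {\<sigma> \<in> Pi_n n. layered \<sigma>} = 2 ^ (n - 1)"
proof (rule card_eq_2_power_if_doubling[where F = "\<lambda>n. {\<sigma> \<in> Pi_n n. layered \<sigma>}", OF _ _ assms])
  have "layered {{1}}"
    using layered_insert_singleton[of "{}" 1] by (simp add: layered_def)
  then have "{\<sigma> \<in> Pi_n 1. layered \<sigma>} = {{{1}}}"
    unfolding Pi_n_1 by auto
  then show "card {\<sigma> \<in> Pi_n 1. layered \<sigma>} = 1"
    by simp
next
  fix n :: nat assume "1 \<le> n"
  have fresh: "Suc n \<notin> {1..n}" and "n \<in> {1..n}"
    using \<open>1 \<le> n\<close> by auto
  show "card {\<sigma> \<in> Pi_n (Suc n). layered \<sigma>} = 2 * card {\<sigma> \<in> Pi_n n. layered \<sigma>}"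
    unfolding layered_partitions_Suc[OF \<open>1 \<le> n\<close>]
  proof (rule card_Un_images_doubling)
    show "finite {\<sigma> \<in> Pi_n n. layered \<sigma>}"
      using finite_Pi_n by simp
    show "insert {Suc n} \<tau> - {{Suc n}} = \<tau>" if "\<tau> \<in> {\<sigma> \<in> Pi_n n. layered \<sigma>}" for \<tau>
      using insert_singleton_Diff[OF fresh] that by (simp add: Pi_n_def)
    show "remove_from_block (Suc n) (insert_into_block (Suc n) n \<tau>) = \<tau>"
      if "\<tau> \<in> {\<sigma> \<in> Pi_n n. layered \<sigma>}" for \<tau>
      using remove_insert_into_block[OF fresh _ \<open>n \<in> {1..n}\<close>] that by (simp add: Pi_n_def)
    show "insert {Suc n} \<tau> \<noteq> insert_into_block (Suc n) n \<tau>'"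
      if "\<tau> \<in> {\<sigma> \<in> Pi_n n. layered \<sigma>}" "\<tau>' \<in> {\<sigma> \<in> Pi_n n. layered \<sigma>}" for \<tau> \<tau>'
      using singleton_notin_insert_into_block[OF fresh _ \<open>n \<in> {1..n}\<close>, of _ "Suc n"] that
      by (auto simp: Pi_n_def)
  qed
qed

definition shift_partition :: "nat set set \<Rightarrow> nat set set" where
  "shift_partition \<tau> = insert {1} ((`) Suc ` \<tau>)"

definition unshift_partition :: "nat set set \<Rightarrow> nat set set" where
  "unshift_partition \<sigma> = (-`) Suc ` (\<sigma> - {{1}})"

lemma Suc_image_interval: "Suc ` {1..n} = {1..Suc n} - {1}"
  by (auto simp: image_iff)

lemma Suc_image_vimage:
  assumes "0 \<notin> C"
  shows "Suc ` (Suc -` C) = C"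
proof (intro equalityI subsetI)
  fix y assume "y \<in> C"
  with assms show "y \<in> Suc ` (Suc -` C)"
    by (cases y) auto
qed auto

lemma
  assumes "partition_on {1..n} \<tau>"
  shows partition_on_shift_partition: "partition_on {1..Suc n} (shift_partition \<tau>)"
    and unshift_shift_partition: "unshift_partition (shift_partition \<tau>) = \<tau>"
proof -
  have "{} \<notin> (`) Suc ` \<tau>"
    using partition_onD3[OF assms] by auto
  then have "partition_on (Suc ` {1..n}) ((`) Suc ` \<tau>)"
    using partition_on_inj_image[OF assms, of Suc] by simp
  then have "partition_on ({1..Suc n} - {1}) ((`) Suc ` \<tau>)"
    by (simp only: Suc_image_interval)
  then show "partition_on {1..Suc n} (shift_partition \<tau>)"
    unfolding shift_partition_def by (rule partition_on_insert_block) auto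
  have "{1} \<notin> (`) Suc ` \<tau>"
  proof
    assume "{1} \<in> (`) Suc ` \<tau>"
    then obtain C where "C \<in> \<tau>" "Suc ` C = {1}"
      by auto
    then have "Suc 0 \<in> Suc ` C"
      by simp
    then have "0 \<in> C"
      by auto
    with partition_on_block_subset[OF assms \<open>C \<in> \<tau>\<close>] show False
      by auto
  qed
  then show "unshift_partition (shift_partition \<tau>) = \<tau>"
    by (simp add: unshift_partition_def shift_partition_def image_image inj_vimage_image_eq)
qed

lemma
  assumes "partition_on {1..Suc n} \<sigma>" "{1} \<in> \<sigma>"
  shows partition_on_unshift_partition: "partition_on {1..n} (unshift_partition \<sigma>)"
    and shift_unshift_partition: "shift_partition (unshift_partition \<sigma>) = \<sigma>"
proof -
  have rest: "partition_on ({1..Suc n} - {1}) (\<sigma> - {{1}})"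
    using partition_on_Diff_block[OF assms] .
  have no_0: "0 \<notin> C" if "C \<in> \<sigma> - {{1}}" for C
    using partition_on_block_subset[OF rest that] by auto
  have "{} \<notin> (-`) Suc ` (\<sigma> - {{1}})"
  proof
    assume "{} \<in> (-`) Suc ` (\<sigma> - {{1}})"
    then obtain C where C: "C \<in> \<sigma> - {{1}}" "Suc -` C = {}"
      by auto
    then obtain c where "c \<in> C"
      using partition_on_block_nonempty[OF rest] by blast
    moreover have "c = Suc (c - 1)"
      using no_0[OF C(1)] \<open>c \<in> C\<close> by (cases c) auto
    ultimately have "c - 1 \<in> Suc -` C"
      by simp
    with C(2) show False
      by simp
  qed
  moreover have "Suc -` ({1..Suc n} - {1}) = {1..n}"
    by auto
  ultimately show "partition_on {1..n} (unshift_partition \<sigma>)"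
    using partition_on_vimage[OF rest, of Suc] by (simp add: unshift_partition_def)
  have "(`) Suc ` (-`) Suc ` (\<sigma> - {{1}}) = \<sigma> - {{1}}"
    using no_0 Suc_image_vimage by (simp add: image_image)
  then show "shift_partition (unshift_partition \<sigma>) = \<sigma>"
    using assms(2) by (auto simp: shift_partition_def unshift_partition_def)
qed

lemma
  assumes "partition_on {1..n} \<tau>"
  shows block_min_shift_partition_1: "block_min (shift_partition \<tau>) 1 = 1"
    and block_min_shift_partition_Suc:
      "i \<in> {1..n} \<Longrightarrow> block_min (shift_partition \<tau>) (Suc i) = Suc (block_min \<tau> i)"
proof -
  note partition = partition_on_shift_partition[OF assms]
  have "{1} \<in> shift_partition \<tau>"
    by (simp add: shift_partition_def)
  then show "block_min (shift_partition \<tau>) 1 = 1"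
    using block_of_eq[OF partition] by (simp add: block_min_def)
  fix i assume "i \<in> {1..n}"
  let ?C = "block_of \<tau> {i}"
  have C: "?C \<in> \<tau>" "i \<in> ?C"
    using block_of_in[OF assms \<open>i \<in> {1..n}\<close>] mem_block_of[OF assms \<open>i \<in> {1..n}\<close>] .
  then have "block_of (shift_partition \<tau>) {Suc i} = Suc ` ?C"
    using block_of_eq[OF partition] by (simp add: shift_partition_def)
  moreover have "finite ?C" "?C \<noteq> {}"
    using C partition_on_block_subset[OF assms C(1)] finite_subset by auto
  then have "Min (Suc ` ?C) = Suc (Min ?C)"
    using mono_Min_commute[of Suc ?C] by (simp add: mono_def)
  ultimately show "block_min (shift_partition \<tau>) (Suc i) = Suc (block_min \<tau> i)"
    by (simp add: block_min_def)
qed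

lemma
  assumes "partition_on {1..n} \<tau>" "m \<in> {1..n}"
  shows block_min_insert_into_block:
      "i \<in> {1..n} \<Longrightarrow> block_min (insert_into_block (Suc n) m \<tau>) i = block_min \<tau> i"
    and block_min_insert_into_block_new: "block_min (insert_into_block (Suc n) m \<tau>) (Suc n) = block_min \<tau> m"
proof -
  have fresh: "Suc n \<notin> {1..n}"
    by simp
  let ?C = "block_of \<tau> {m}"
  have partition: "partition_on (insert (Suc n) {1..n}) (insert_into_block (Suc n) m \<tau>)"
    using partition_on_insert_into_block[OF fresh assms] .
  have C: "?C \<in> \<tau>" "m \<in> ?C" "?C \<subseteq> {1..n}"
    using block_of_in[OF assms] mem_block_of[OF assms] partition_on_block_subset[OF assms(1)] by auto
  have "finite ?C"
    using C(3) finite_subset by blast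
  moreover from this have "Min ?C \<le> n"
    using assms(2) Min_le[OF _ C(2)] by fastforce
  ultimately have Min_C: "Min (insert (Suc n) ?C) = Min ?C"
    using C(2) by (subst Min_insert) auto
  then show "block_min (insert_into_block (Suc n) m \<tau>) (Suc n) = block_min \<tau> m"
    using block_of_insert_into_block[OF fresh assms] by (simp add: block_min_def)
  fix i assume "i \<in> {1..n}"
  show "block_min (insert_into_block (Suc n) m \<tau>) i = block_min \<tau> i"
  proof (cases "i \<in> ?C")
    case True
    then have "block_of (insert_into_block (Suc n) m \<tau>) {i} = insert (Suc n) ?C"
      using block_of_eq[OF partition] by (simp add: insert_into_block_def)
    moreover have "block_of \<tau> {i} = ?C"
      using block_of_eq[OF assms(1) C(1)] True by simp
    ultimately show ?thesis
      using Min_C by (simp add: block_min_def)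
  next
    case False
    let ?D = "block_of \<tau> {i}"
    have "?D \<in> \<tau>" "i \<in> ?D"
      using block_of_in[OF assms(1) \<open>i \<in> {1..n}\<close>] mem_block_of[OF assms(1) \<open>i \<in> {1..n}\<close>] .
    moreover from this have "?D \<noteq> ?C"
      using False by blast
    ultimately have "block_of (insert_into_block (Suc n) m \<tau>) {i} = ?D"
      using block_of_eq[OF partition] by (simp add: insert_into_block_def)
    then show ?thesis
      by (simp add: block_min_def)
  qed
qed

lemma occurs_112_shift_iff:
  assumes "f 1 = 1" "\<And>i. i \<in> {1..n} \<Longrightarrow> f (Suc i) = Suc (g i)" "\<And>i. i \<in> {1..n} \<Longrightarrow> 1 \<le> g i"
  shows "occurs_112 f (Suc n) \<longleftrightarrow> occurs_112 g n"
proof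
  assume "occurs_112 f (Suc n)"
  then obtain i j l where ijl: "1 \<le> i" "i < j" "j < l" "l \<le> Suc n" "f i = f j" "f j < f l"
    unfolding occurs_112_def by blast
  obtain i' j' l' where shifted: "i = Suc i'" "j = Suc j'" "l = Suc l'"
    using ijl(1-3) by (cases i; cases j; cases l) auto
  have "i \<noteq> 1"
  proof
    assume "i = 1"
    then have "f j = 1"
      using ijl assms(1) by simp
    moreover have "f j = Suc (g j')" "1 \<le> g j'"
      using assms(2,3)[of j'] shifted ijl \<open>i = 1\<close> by auto
    ultimately show False
      by simp
  qed
  with ijl shifted assms(2)[of i'] assms(2)[of j'] assms(2)[of l'] show "occurs_112 g n"
    unfolding occurs_112_def by (intro exI[of _ i'] exI[of _ j'] exI[of _ l']) auto
next
  assume "occurs_112 g n"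
  then obtain i j l where ijl: "1 \<le> i" "i < j" "j < l" "l \<le> n" "g i = g j" "g j < g l"
    unfolding occurs_112_def by blast
  with assms(2)[of i] assms(2)[of j] assms(2)[of l] show "occurs_112 f (Suc n)"
    unfolding occurs_112_def by (intro exI[of _ "Suc i"] exI[of _ "Suc j"] exI[of _ "Suc l"]) auto
qed

lemma occurs_112_Suc_min_iff:
  assumes "\<And>i. i \<in> {1..n} \<Longrightarrow> f i = g i" "\<And>i. i \<in> {1..n} \<Longrightarrow> f (Suc n) \<le> g i"
  shows "occurs_112 f (Suc n) \<longleftrightarrow> occurs_112 g n"
proof
  assume "occurs_112 f (Suc n)"
  then obtain i j l where ijl: "1 \<le> i" "i < j" "j < l" "l \<le> Suc n" "f i = f j" "f j < f l"
    unfolding occurs_112_def by blast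
  have "l \<noteq> Suc n"
  proof
    assume "l = Suc n"
    then have "f l \<le> f j"
      using ijl assms[of j] by simp
    with ijl show False
      by simp
  qed
  with ijl have "i \<in> {1..n}" "j \<in> {1..n}" "l \<in> {1..n}"
    by auto
  with ijl assms(1) have "g i = g j" "g j < g l"
    by auto
  with ijl \<open>l \<noteq> Suc n\<close> show "occurs_112 g n"
    unfolding occurs_112_def by (metis le_SucE)
next
  assume "occurs_112 g n"
  then obtain i j l where ijl: "1 \<le> i" "i < j" "j < l" "l \<le> n" "g i = g j" "g j < g l"
    unfolding occurs_112_def by blast
  then have "i \<in> {1..n}" "j \<in> {1..n}" "l \<in> {1..n}"
    by auto
  with ijl assms(1) have "f i = f j" "f j < f l"
    by auto
  with ijl show "occurs_112 f (Suc n)"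
    unfolding occurs_112_def by (metis le_SucI)
qed

context interval_partition
begin

lemma max_in_block_of_1:
  assumes "\<not> occurs_112 (block_min \<sigma>) n" "{1} \<notin> \<sigma>" "1 \<le> n"
  shows "n \<in> block_of \<sigma> {1}"
proof (rule ccontr)
  let ?B = "block_of \<sigma> {1}"
  assume "n \<notin> ?B"
  have "1 \<in> {1..n}"
    using assms(3) by simp
  then have B: "?B \<in> \<sigma>" "1 \<in> ?B"
    using block_of_in[OF partition] mem_block_of[OF partition] by blast+
  with assms(2) have "?B - {1} \<noteq> {}"
    by (metis insert_Diff_single insert_absorb)
  then obtain j where j: "j \<in> ?B" "j \<noteq> 1"
    by blast
  then have "j \<in> {1..n}" "j \<noteq> n"
    using partition_on_block_subset[OF partition B(1)] \<open>n \<notin> ?B\<close> by auto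
  have "Min ?B = 1"
    using block_min_eq[OF B] block_min_1[OF assms(3)] by simp
  then have "block_min \<sigma> j = 1" "block_min \<sigma> n \<noteq> 1"
    using block_min_eq[OF B(1) j(1)] block_min_eq_Min_iff[OF _ B(1), of n] \<open>n \<notin> ?B\<close> assms(3) by auto
  then have "block_min \<sigma> 1 = block_min \<sigma> j" "block_min \<sigma> j < block_min \<sigma> n"
    using block_min_1[OF assms(3)] block_min_ge_1[of n] assms(3) by auto
  moreover have "1 < j" "j < n"
    using \<open>j \<in> {1..n}\<close> \<open>j \<noteq> n\<close> j(2) by auto
  ultimately have "occurs_112 (block_min \<sigma>) n"
    unfolding occurs_112_def by (intro exI[of _ 1] exI[of _ j] exI[of _ n]) auto
  with assms(1) show False ..
qed

end

lemma occurs_112_shift_partition_iff: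
  assumes "partition_on {1..n} \<tau>"
  shows "occurs_112 (block_min (shift_partition \<tau>)) (Suc n) \<longleftrightarrow> occurs_112 (block_min \<tau>) n"
  using block_min_shift_partition_1[OF assms] block_min_shift_partition_Suc[OF assms]
    interval_partition.block_min_ge_1[OF interval_partitionI[OF assms]]
  by (intro occurs_112_shift_iff) auto

lemma occurs_112_insert_into_block_1_iff:
  assumes "partition_on {1..n} \<tau>" "1 \<le> n"
  shows "occurs_112 (block_min (insert_into_block (Suc n) 1 \<tau>)) (Suc n) \<longleftrightarrow> occurs_112 (block_min \<tau>) n"
proof (rule occurs_112_Suc_min_iff)
  have "1 \<in> {1..n}"
    using assms(2) by simp
  note \<tau> = interval_partitionI[OF assms(1)]
  show "block_min (insert_into_block (Suc n) 1 \<tau>) i = block_min \<tau> i" if "i \<in> {1..n}" for i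
    using block_min_insert_into_block[OF assms(1) \<open>1 \<in> {1..n}\<close> that] .
  show "block_min (insert_into_block (Suc n) 1 \<tau>) (Suc n) \<le> block_min \<tau> i" if "i \<in> {1..n}" for i
    using block_min_insert_into_block_new[OF assms(1) \<open>1 \<in> {1..n}\<close>]
      interval_partition.block_min_1[OF \<tau> assms(2)] interval_partition.block_min_ge_1[OF \<tau> that] by simp
qed

lemma avoiding_112_partition_Suc_cases:
  assumes partition: "partition_on {1..Suc n} \<sigma>" and avoids: "\<not> occurs_112 (block_min \<sigma>) (Suc n)"
    and "1 \<le> n"
  obtains (shifted) \<tau> where "partition_on {1..n} \<tau>" "\<not> occurs_112 (block_min \<tau>) n"
      "\<sigma> = shift_partition \<tau>"
    | (joined) \<tau> where "partition_on {1..n} \<tau>" "\<not> occurs_112 (block_min \<tau>) n"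
      "\<sigma> = insert_into_block (Suc n) 1 \<tau>"
proof (cases "{1} \<in> \<sigma>")
  case True
  let ?\<tau> = "unshift_partition \<sigma>"
  have \<tau>: "partition_on {1..n} ?\<tau>" "shift_partition ?\<tau> = \<sigma>"
    using partition_on_unshift_partition[OF partition True] shift_unshift_partition[OF partition True] .
  moreover from this have "\<not> occurs_112 (block_min ?\<tau>) n"
    using avoids occurs_112_shift_partition_iff[OF \<tau>(1)] by simp
  ultimately show ?thesis
    using shifted by simp
next
  case False
  have fresh: "Suc n \<notin> {1..n}" and interval: "insert (Suc n) {1..n} = {1..Suc n}"
    by auto
  let ?\<tau> = "remove_from_block (Suc n) \<sigma>"
  have "Suc n \<in> block_of \<sigma> {1}"
    using interval_partition.max_in_block_of_1[OF interval_partitionI[OF partition] avoids False] by simp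
  then have "1 \<in> block_of \<sigma> {Suc n}"
    using block_of_eq[OF partition block_of_in[OF partition], of 1 "{Suc n}"] mem_block_of[OF partition, of 1]
    by simp
  then have \<tau>: "partition_on {1..n} ?\<tau>" "insert_into_block (Suc n) 1 ?\<tau> = \<sigma>"
    using partition_on_remove_from_block[OF fresh, of \<sigma> 1] insert_into_remove_from_block[OF fresh, of \<sigma> 1]
      partition interval \<open>1 \<le> n\<close> by auto
  moreover have "\<not> occurs_112 (block_min ?\<tau>) n"
    using avoids occurs_112_insert_into_block_1_iff[OF \<tau>(1) \<open>1 \<le> n\<close>] \<tau>(2) by simp
  ultimately show ?thesis
    using joined by simp
qed

lemma avoiding_112_partitions_Suc:
  assumes "1 \<le> n"
  defines "R \<equiv> \<lambda>n. {\<sigma> \<in> Pi_n n. \<not> occurs_112 (block_min \<sigma>) n}"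
  shows "R (Suc n) = shift_partition ` R n \<union> insert_into_block (Suc n) 1 ` R n"
proof (intro equalityI subsetI)
  fix \<sigma> assume "\<sigma> \<in> R (Suc n)"
  then have "partition_on {1..Suc n} \<sigma>" "\<not> occurs_112 (block_min \<sigma>) (Suc n)"
    unfolding R_def Pi_n_def by auto
  then show "\<sigma> \<in> shift_partition ` R n \<union> insert_into_block (Suc n) 1 ` R n"
    by (cases rule: avoiding_112_partition_Suc_cases[OF _ _ assms(1)]) (unfold R_def Pi_n_def, blast+)
next
  have fresh: "Suc n \<notin> {1..n}" and interval: "insert (Suc n) {1..n} = {1..Suc n}" and "1 \<in> {1..n}"
    using assms by auto
  fix \<sigma> assume "\<sigma> \<in> shift_partition ` R n \<union> insert_into_block (Suc n) 1 ` R n"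
  then obtain \<tau> where \<tau>: "partition_on {1..n} \<tau>" "\<not> occurs_112 (block_min \<tau>) n"
    and cases: "\<sigma> = shift_partition \<tau> \<or> \<sigma> = insert_into_block (Suc n) 1 \<tau>"
    unfolding R_def Pi_n_def by blast
  with partition_on_shift_partition[OF \<tau>(1)] occurs_112_shift_partition_iff[OF \<tau>(1)]
    partition_on_insert_into_block[OF fresh \<tau>(1) \<open>1 \<in> {1..n}\<close>]
    occurs_112_insert_into_block_1_iff[OF \<tau>(1) assms(1)]
  show "\<sigma> \<in> R (Suc n)"
    unfolding R_def Pi_n_def interval by auto
qed

lemma card_avoiding_112_partitions:
  assumes "1 \<le> n"
  shows "card {\<sigma> \<in> Pi_n n. \<not> occurs_112 (block_min \<sigma>) n} = 2 ^ (n - 1)"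
proof (rule card_eq_2_power_if_doubling[where F = "\<lambda>n. {\<sigma> \<in> Pi_n n. \<not> occurs_112 (block_min \<sigma>) n}", OF _ _ assms])
  have "\<not> occurs_112 f 1" for f
    unfolding occurs_112_def by auto
  then have "{\<sigma> \<in> Pi_n 1. \<not> occurs_112 (block_min \<sigma>) 1} = {{{1}}}"
    unfolding Pi_n_1 by auto
  then show "card {\<sigma> \<in> Pi_n 1. \<not> occurs_112 (block_min \<sigma>) 1} = 1"
    by simp
next
  fix n :: nat assume "1 \<le> n"
  have fresh: "Suc n \<notin> {1..n}" and "1 \<in> {1..n}"
    using \<open>1 \<le> n\<close> by auto
  let ?R = "{\<sigma> \<in> Pi_n n. \<not> occurs_112 (block_min \<sigma>) n}"
  show "card {\<sigma> \<in> Pi_n (Suc n). \<not> occurs_112 (block_min \<sigma>) (Suc n)} = 2 * card ?R"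
    unfolding avoiding_112_partitions_Suc[OF \<open>1 \<le> n\<close>]
  proof (rule card_Un_images_doubling)
    show "finite ?R"
      using finite_Pi_n by simp
    show "unshift_partition (shift_partition \<tau>) = \<tau>" if "\<tau> \<in> ?R" for \<tau>
      using that by (auto simp: Pi_n_def unshift_shift_partition)
    show "remove_from_block (Suc n) (insert_into_block (Suc n) 1 \<tau>) = \<tau>" if "\<tau> \<in> ?R" for \<tau>
      using remove_insert_into_block[OF fresh _ \<open>1 \<in> {1..n}\<close>] that by (simp add: Pi_n_def)
    show "shift_partition \<tau> \<noteq> insert_into_block (Suc n) 1 \<tau>'" if "\<tau> \<in> ?R" "\<tau>' \<in> ?R" for \<tau> \<tau>'
      using singleton_notin_insert_into_block[OF fresh _ \<open>1 \<in> {1..n}\<close>, of \<tau>' 1] that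
      by (auto simp: Pi_n_def shift_partition_def)
  qed
qed

lemma partitions_eq_UN_block_containing:
  assumes "x \<in> A"
  shows "{\<sigma>. partition_on A \<sigma> \<and> (\<forall>C\<in>\<sigma>. P C)} =
    (\<Union>C\<in>{C. x \<in> C \<and> C \<subseteq> A \<and> P C}. insert C ` {\<tau>. partition_on (A - C) \<tau> \<and> (\<forall>D\<in>\<tau>. P D)})"
    (is "?L = ?R")
proof (intro equalityI subsetI)
  fix \<sigma> assume "\<sigma> \<in> ?L"
  then have partition: "partition_on A \<sigma>" and blocks: "\<forall>C\<in>\<sigma>. P C"
    by auto
  obtain C where C: "C \<in> \<sigma>" "x \<in> C"
    using partition_onD1[OF partition] assms by blast
  then have "C \<subseteq> A" "P C"
    using blocks partition_on_block_subset[OF partition] by blast+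
  moreover have "partition_on (A - C) (\<sigma> - {C})" "\<forall>D\<in>\<sigma> - {C}. P D"
    using partition_on_Diff_block[OF partition C(1)] blocks by blast+
  moreover have "\<sigma> = insert C (\<sigma> - {C})"
    using C(1) by blast
  ultimately show "\<sigma> \<in> ?R"
    using C(2) by blast
next
  fix \<sigma> assume "\<sigma> \<in> ?R"
  then obtain C \<tau> where "x \<in> C" "C \<subseteq> A" "P C" "partition_on (A - C) \<tau>" "\<forall>D\<in>\<tau>. P D"
    and "\<sigma> = insert C \<tau>"
    by blast
  then show "\<sigma> \<in> ?L"
    using partition_on_insert_block by blast
qed

lemma card_partitions_by_block_containing:
  assumes "finite A" "x \<in> A"
  shows "card {\<sigma>. partition_on A \<sigma> \<and> (\<forall>C\<in>\<sigma>. P C)} =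
    (\<Sum>C\<in>{C. x \<in> C \<and> C \<subseteq> A \<and> P C}. card {\<tau>. partition_on (A - C) \<tau> \<and> (\<forall>D\<in>\<tau>. P D)})"
proof -
  define F where "F B = {\<tau>. partition_on B \<tau> \<and> (\<forall>D\<in>\<tau>. P D)}" for B
  define K where "K = {C. x \<in> C \<and> C \<subseteq> A \<and> P C}"
  have F_finite: "finite (F B)" if "B \<subseteq> A" for B
    unfolding F_def using finitely_many_partition_on[OF finite_subset[OF that assms(1)]] by simp
  have "F A = (\<Union>C\<in>K. insert C ` F (A - C))"
    unfolding F_def K_def using partitions_eq_UN_block_containing[OF assms(2)] .
  moreover have "card (insert C ` F (A - C)) = card (F (A - C))" if "C \<in> K" for C
  proof (rule card_image, rule inj_on_inverseI)
    show "insert C \<tau> - {C} = \<tau>" if "\<tau> \<in> F (A - C)" for \<tau>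
      using that \<open>C \<in> K\<close> partition_on_block_subset unfolding F_def K_def by fastforce
  qed
  moreover have "insert C ` F (A - C) \<inter> insert C' ` F (A - C') = {}" if "C \<in> K" "C' \<in> K" "C \<noteq> C'" for C C'
  proof -
    have "C = C'" if "\<tau> \<in> F (A - C)" "insert C \<tau> = insert C' \<tau>'" "\<tau>' \<in> F (A - C')" for \<tau> \<tau>'
    proof -
      have "partition_on A (insert C \<tau>)"
        using that(1) \<open>C \<in> K\<close> partition_on_insert_block unfolding F_def K_def by blast
      moreover have "C' \<in> insert C \<tau>"
        unfolding that(2) by simp
      moreover have "x \<in> C" "x \<in> C'"
        using \<open>C \<in> K\<close> \<open>C' \<in> K\<close> unfolding K_def by simp_all
      ultimately show "C = C'"
        using partition_on_block_eq[of A "insert C \<tau>" C C' x] by simp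
    qed
    with that(3) show ?thesis
      by blast
  qed
  moreover have "finite K"
    using assms(1) unfolding K_def by (simp add: finite_subset[of _ "Pow A"] subset_iff)
  ultimately show ?thesis
    unfolding F_def[symmetric] K_def[symmetric]
    by (simp add: card_UN_disjoint F_finite)
qed

definition telephone :: "nat \<Rightarrow> nat" where
  "telephone m = (\<Sum>i\<le>m. (m choose (2 * i)) * dfact i)"

lemma telephone_eq_sum_atMost:
  assumes "m \<le> N"
  shows "(\<Sum>i\<le>N. (m choose (2 * i)) * dfact i) = telephone m"
  unfolding telephone_def using assms by (intro sum.mono_neutral_right) auto

lemma telephone_Suc: "telephone (Suc m) = telephone m + m * telephone (m - 1)"
proof (cases m)
  case 0
  then show ?thesis
    by (simp add: telephone_def dfact_def)
next
  case (Suc k)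
  have summand: "(Suc k choose Suc (2 * i)) * dfact (Suc i) = Suc k * ((k choose (2 * i)) * dfact i)" for i
  proof -
    have "(Suc k choose Suc (2 * i)) * dfact (Suc i) = (Suc (2 * i) * (Suc k choose Suc (2 * i))) * dfact i"
      by (simp add: dfact_def algebra_simps del: binomial_Suc_Suc)
    also have "\<dots> = Suc k * (k choose (2 * i)) * dfact i"
      by (simp only: Suc_times_binomial)
    finally show ?thesis
      by (simp add: algebra_simps del: binomial_Suc_Suc)
  qed
  have "telephone (Suc (Suc k)) = 1 + (\<Sum>i\<le>Suc k. (Suc (Suc k) choose (2 * Suc i)) * dfact (Suc i))"
    unfolding telephone_def by (subst sum.atMost_Suc_shift) (simp add: dfact_def)
  also have "\<dots> = (1 + (\<Sum>i\<le>Suc k. (Suc k choose (2 * Suc i)) * dfact (Suc i)))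
      + (\<Sum>i\<le>Suc k. (Suc k choose Suc (2 * i)) * dfact (Suc i))"
    by (simp add: sum.distrib algebra_simps)
  also have "1 + (\<Sum>i\<le>Suc k. (Suc k choose (2 * Suc i)) * dfact (Suc i)) =
      (\<Sum>i\<le>Suc (Suc k). (Suc k choose (2 * i)) * dfact i)"
    by (subst (2) sum.atMost_Suc_shift) (simp add: dfact_def)
  also have "\<dots> = telephone (Suc k)"
    by (rule telephone_eq_sum_atMost) simp
  also have "(\<Sum>i\<le>Suc k. (Suc k choose Suc (2 * i)) * dfact (Suc i)) =
      Suc k * (\<Sum>i\<le>Suc k. (k choose (2 * i)) * dfact i)"
    unfolding sum_distrib_left by (intro sum.cong refl summand)
  also have "\<dots> = Suc k * telephone k"
    using telephone_eq_sum_atMost[of k "Suc k"] by simp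
  finally show ?thesis
    using Suc by simp
qed

lemma blocks_of_matchings_containing:
  assumes "finite A" "x \<in> A"
  shows "{C. x \<in> C \<and> C \<subseteq> A \<and> card C \<le> 2} = insert {x} ((\<lambda>y. {x, y}) ` (A - {x}))"
proof (intro equalityI subsetI)
  fix C assume "C \<in> {C. x \<in> C \<and> C \<subseteq> A \<and> card C \<le> 2}"
  then have C: "x \<in> C" "C \<subseteq> A" "card C \<le> 2"
    by auto
  then have "finite (C - {x})" "card (C - {x}) \<le> 1"
    using finite_subset[OF C(2) assms(1)] by auto
  then have "\<forall>a\<in>C - {x}. \<forall>b\<in>C - {x}. a = b"
    using card_le_Suc0_iff_eq by (metis One_nat_def)
  then have "C = {x} \<or> (\<exists>y\<in>A - {x}. C = {x, y})"
    using C(1,2) by blast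
  then show "C \<in> insert {x} ((\<lambda>y. {x, y}) ` (A - {x}))"
    by blast
next
  fix C assume "C \<in> insert {x} ((\<lambda>y. {x, y}) ` (A - {x}))"
  then show "C \<in> {C. x \<in> C \<and> C \<subseteq> A \<and> card C \<le> 2}"
    using assms(2) by (auto simp: card_insert_if)
qed

definition matchings :: "'a set \<Rightarrow> 'a set set set" where
  "matchings A = {\<sigma>. partition_on A \<sigma> \<and> (\<forall>C\<in>\<sigma>. card C \<le> 2)}"

lemma card_matchings_remove:
  assumes "finite A" "x \<in> A"
  shows "card (matchings A) = card (matchings (A - {x})) + (\<Sum>y\<in>A - {x}. card (matchings (A - {x, y})))"
proof -
  have "card (matchings A) = (\<Sum>C\<in>insert {x} ((\<lambda>y. {x, y}) ` (A - {x})). card (matchings (A - C)))"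
    using card_partitions_by_block_containing[OF assms, of "\<lambda>C. card C \<le> 2"]
      blocks_of_matchings_containing[OF assms] by (simp add: matchings_def)
  moreover have "inj_on (\<lambda>y. {x, y}) (A - {x})" "{x} \<notin> (\<lambda>y. {x, y}) ` (A - {x})"
    by (auto simp: inj_on_def doubleton_eq_iff)
  ultimately show ?thesis
    using assms(1) by (simp add: sum.reindex)
qed

lemma card_matchings: "finite A \<Longrightarrow> card (matchings A) = telephone (card A)"
proof (induction "card A" arbitrary: A rule: less_induct)
  case less
  show ?case
  proof (cases "A = {}")
    case True
    then have "matchings A = {{}}"
      by (auto simp: matchings_def partition_on_empty)
    with True show ?thesis
      by (simp add: telephone_def dfact_def)
  next
    case False
    then obtain x where x: "x \<in> A"
      by blast
    let ?m = "card A - 1"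
    have card_A: "card A = Suc ?m"
      using less.prems x by (simp add: card_gt_0_iff Suc_diff_1 False)
    have IH: "card (matchings B) = telephone (card B)" if "B \<subseteq> A - {x}" for B
      using less.hyps[of B] that x less.prems finite_subset psubset_card_mono by blast
    have "card (matchings (A - {x, y})) = telephone (?m - 1)" if "y \<in> A - {x}" for y
    proof -
      have "card (A - {x, y}) = ?m - 1"
        using that less.prems x by (auto simp: card_Diff_subset)
      then show ?thesis
        using IH[of "A - {x, y}"] by auto
    qed
    then have "card (matchings A) = telephone ?m + ?m * telephone (?m - 1)"
      using card_matchings_remove[OF less.prems x] IH[of "A - {x}"] less.prems x by simp
    also have "\<dots> = telephone (Suc ?m)"
      by (rule telephone_Suc[symmetric])
    finally show ?thesis
      by (simp only: card_A[symmetric])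
  qed
qed

lemma card_matching_partitions:
  "card {\<sigma> \<in> Pi_n n. is_matching \<sigma>} = (\<Sum>i\<le>n. (n choose (2 * i)) * dfact i)"
proof -
  have "{\<sigma> \<in> Pi_n n. is_matching \<sigma>} = matchings {1..n}"
    by (simp add: Pi_n_def is_matching_def matchings_def)
  then show ?thesis
    using card_matchings[of "{1..n}"] by (simp add: telephone_def)
qed

lemma R_avoid_eqI:
  assumes "\<And>\<sigma>. interval_partition n \<sigma> \<Longrightarrow> \<not> contains (rgf \<sigma> n) (rgf \<pi> 3) \<longleftrightarrow> P \<sigma>"
  shows "R_avoid n \<pi> = {\<sigma> \<in> Pi_n n. P \<sigma>}"
  using assms by (auto simp: R_avoid_def interval_partition_iff)

lemma R_avoid_1_2_3: "R_avoid n {{1},{2},{3}} = {\<sigma> \<in> Pi_n n. card \<sigma> \<le> 2}"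
  by (rule R_avoid_eqI) (simp only: rgf_1_2_3 interval_partition.avoids_1_2_3_iff)

lemma R_avoid_123: "R_avoid n {{1,2,3}} = {\<sigma> \<in> Pi_n n. is_matching \<sigma>}"
  by (rule R_avoid_eqI) (simp only: rgf_123 interval_partition.avoids_123_iff)

lemma R_avoid_12_3:
  "R_avoid n {{1,2},{3}} = {\<sigma> \<in> Pi_n n. \<exists>k\<le>n. restr \<sigma> {1..k} = {{i} | i. i \<in> {1..k}}
    \<and> layered (restr \<sigma> {k+1..n}) \<and> (\<forall>D\<in>restr \<sigma> {k+1..n}. \<forall>D'\<in>restr \<sigma> {k+1..n}.
      Min D < Min D' \<longrightarrow> Bidx \<sigma> D > Bidx \<sigma> D')}"
  by (rule R_avoid_eqI) (simp only: rgf_12_3 interval_partition.avoids_12_3_iff)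

lemma R_avoid_12_3_eq_not_occurs_112:
  "R_avoid n {{1,2},{3}} = {\<sigma> \<in> Pi_n n. \<not> occurs_112 (block_min \<sigma>) n}"
  by (rule R_avoid_eqI) (simp only: rgf_12_3 interval_partition.contains_12_3_iff)

lemma R_avoid_1_23:
  "R_avoid n {{1},{2,3}} = {\<sigma> \<in> Pi_n n. \<forall>C\<in>\<sigma>. blockidx \<sigma> C \<ge> 2 \<longrightarrow> card C = 1}"
  by (rule R_avoid_eqI) (simp only: rgf_1_23 interval_partition.avoids_1_23_iff_blockidx)

lemma R_avoid_1_23_eq_singletons:
  "R_avoid n {{1},{2,3}} = {\<sigma> \<in> Pi_n n. \<forall>C\<in>\<sigma>. 1 \<notin> C \<longrightarrow> card C = 1}"
  by (rule R_avoid_eqI) (simp only: rgf_1_23 interval_partition.avoids_1_23_iff)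

lemma R_avoid_13_2: "R_avoid n {{1,3},{2}} = {\<sigma> \<in> Pi_n n. layered \<sigma>}"
  by (rule R_avoid_eqI) (simp only: rgf_13_2 interval_partition.avoids_13_2_iff)

theorem theorem4p3:
  fixes n :: nat
  assumes "n \<ge> 1"
  shows
   "(R_avoid n {{1},{2},{3}} = {\<sigma> \<in> Pi_n n. card \<sigma> \<le> 2}
      \<and> card (R_avoid n {{1},{2},{3}}) = 2^(n-1))
    \<and> (R_avoid n {{1,2,3}} = {\<sigma> \<in> Pi_n n. is_matching \<sigma>}
      \<and> card (R_avoid n {{1,2,3}}) = (\<Sum>i\<le>n. (n choose (2*i)) * dfact i))
    \<and> (R_avoid n {{1,2},{3}} =
        {\<sigma> \<in> Pi_n n. \<exists>k\<le>n. restr \<sigma> {1..k} = {{i} | i. i \<in> {1..k}}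
           \<and> layered (restr \<sigma> {k+1..n})
           \<and> (\<forall>D\<in>restr \<sigma> {k+1..n}. \<forall>D'\<in>restr \<sigma> {k+1..n}.
                 Min D < Min D' \<longrightarrow> Bidx \<sigma> D > Bidx \<sigma> D')}
      \<and> card (R_avoid n {{1,2},{3}}) = 2^(n-1))
    \<and> (R_avoid n {{1},{2,3}} =
        {\<sigma> \<in> Pi_n n. \<forall>C\<in>\<sigma>. blockidx \<sigma> C \<ge> 2 \<longrightarrow> card C = 1}
      \<and> card (R_avoid n {{1},{2,3}}) = 2^(n-1))
    \<and> (R_avoid n {{1,3},{2}} = {\<sigma> \<in> Pi_n n. layered \<sigma>}
      \<and> card (R_avoid n {{1,3},{2}}) = 2^(n-1))"
proof -
  have "card (R_avoid n {{1},{2},{3}}) = 2^(n-1)"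
    unfolding R_avoid_1_2_3 by (rule card_partitions_at_most_2_blocks[OF assms])
  moreover have "card (R_avoid n {{1,2,3}}) = (\<Sum>i\<le>n. (n choose (2*i)) * dfact i)"
    unfolding R_avoid_123 by (rule card_matching_partitions)
  moreover have "card (R_avoid n {{1,2},{3}}) = 2^(n-1)"
    unfolding R_avoid_12_3_eq_not_occurs_112 by (rule card_avoiding_112_partitions[OF assms])
  moreover have "card (R_avoid n {{1},{2,3}}) = 2^(n-1)"
    unfolding R_avoid_1_23_eq_singletons by (rule card_partitions_singletons_apart_from_1[OF assms])
  moreover have "card (R_avoid n {{1,3},{2}}) = 2^(n-1)"
    unfolding R_avoid_13_2 by (rule card_layered_partitions[OF assms])
  ultimately show ?thesis
    using R_avoid_1_2_3 R_avoid_123 R_avoid_12_3 R_avoid_1_23 R_avoid_13_2 by (intro conjI) assumption+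
qed

end
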